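(* Let $A$ be a commutative ring, $r,d\ge1$, $B=A[x_1,\dots,x_r]$, let $x^\alpha\in B$ be a monomial and $k,m$ positive integers with $k\le d$. If $km\le d$ then $$\gamma^k(x^{m\alpha})\times\gamma^{d-k}(1)-(-1)^{km-k}m\,\gamma^{km}(x^\alpha)\times\gamma^{d-km}(1)\in\Gamma^d_A(B)_{<km\alpha},$$ and if $km>d$ then $\gamma^k(x^{m\alpha})\times\gamma^{d-k}(1)\in\Gamma^d_A(B)_{<km\alpha}$.
   Context: $\Gamma^d_A(B)$ is identified with the ring of symmetric tensors $\mathrm{TS}^d_A(B)=(B^{\otimes_A d})^{\mathfrak S_d}$ (componentwise multiplication). For a monomial $f$ and $0\le k\le d$, $\gamma^k(f)\times\gamma^{d-k}(1)$ denotes the sum of all distinct tensors obtained by permuting the factors of $f^{\otimes k}\otimes1^{\otimes(d-k)}$, i.e. $\sum_{S\subseteq\{1..d\},|S|=k}\bigotimes_{j=1}^d f_j$ with $f_j=f$ for $j\in S$ and $f_j=1$ otherwise. $B^{\otimes d}$ is $\mathbb{N}^r$-graded by giving $x^{\beta_1}\otimes\dots\otimes x^{\beta_d}$ multidegree $\beta_1+\dots+\beta_d$; this induces an $\mathbb{N}^r$-grading of $\Gamma^d_A(B)$. For $\gamma\in\mathbb{N}^r$, $\Gamma^d_A(B)_{<\gamma}$ is the $A$-subalgebra generated by the homogeneous elements of multidegree $\beta$ with $\beta<\gamma$, where $\beta<\gamma$ means $\beta\le\gamma$ componentwise and $\beta\ne\gamma$. *)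

theory Defs
  imports "HOL-Library.Poly_Mapping" "HOL-Combinatorics.Permutations"
begin

(* 
  Model of B^{\<otimes> d} for B = A[x_1,...,x_r]: the A-algebra with A-basis the pure tensors
  x^{e_1} \<otimes> ... \<otimes> x^{e_d}, i.e. the monoid algebra over the exponent data
  ('d \<times> 'r) \<Rightarrow>\<^sub>0 nat (entry (j,i) = exponent of x_i in tensor factor j).
  The index sets of tensor factors and of variables are finite types 'd and 'r,
  so d = CARD('d) \<ge> 1 and r = CARD('r) \<ge> 1.  Multiplication of poly_mapping is the
  convolution, i.e. componentwise multiplication of pure tensors.
 *)

type_synonym ('d, 'r, 'a) tens = "(('d \<times> 'r) \<Rightarrow>\<^sub>0 nat) \<Rightarrow>\<^sub>0 'a"

definition tmon :: "('d::finite \<Rightarrow> 'r::finite \<Rightarrow> nat) \<Rightarrow> ('d \<times> 'r) \<Rightarrow>\<^sub>0 nat" where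
  "tmon e = Abs_poly_mapping (\<lambda>(j, i). e j i)"

definition ptensor :: "('d::finite \<Rightarrow> 'r::finite \<Rightarrow> nat) \<Rightarrow> ('d, 'r, 'a::comm_ring_1) tens" where
  "ptensor e = Poly_Mapping.single (tmon e) 1"

(* gamma^k(x^\<beta>) \<times> gamma^{d-k}(1): sum over all k-subsets S of tensor positions. *)
definition gam :: "nat \<Rightarrow> ('r::finite \<Rightarrow> nat) \<Rightarrow> ('d::finite, 'r, 'a::comm_ring_1) tens" where
  "gam k \<beta> = (\<Sum>S \<in> {S :: 'd set. card S = k}. ptensor (\<lambda>j. if j \<in> S then \<beta> else (\<lambda>_. 0)))"

definition mdeg :: "(('d::finite \<times> 'r) \<Rightarrow>\<^sub>0 nat) \<Rightarrow> 'r \<Rightarrow> nat" where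
  "mdeg m = (\<lambda>i. \<Sum>j\<in>UNIV. Poly_Mapping.lookup m (j, i))"

definition homogeneous :: "('r \<Rightarrow> nat) \<Rightarrow> ('d::finite, 'r, 'a::comm_ring_1) tens \<Rightarrow> bool" where
  "homogeneous \<beta> p \<longleftrightarrow> (\<forall>m \<in> Poly_Mapping.keys p. mdeg m = \<beta>)"

definition perm_mon :: "('d \<Rightarrow> 'd) \<Rightarrow> (('d::finite \<times> 'r::finite) \<Rightarrow>\<^sub>0 nat) \<Rightarrow> ('d \<times> 'r) \<Rightarrow>\<^sub>0 nat" where
  "perm_mon \<sigma> m = Abs_poly_mapping (\<lambda>(j, i). Poly_Mapping.lookup m (\<sigma> j, i))"

(* Symmetric tensors TS^d_A(B) = \<Gamma>^d_A(B). *)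
definition symmetric :: "('d::finite, 'r::finite, 'a::comm_ring_1) tens \<Rightarrow> bool" where
  "symmetric p \<longleftrightarrow> (\<forall>\<sigma>. \<sigma> permutes (UNIV :: 'd set) \<longrightarrow>
      (\<forall>m. Poly_Mapping.lookup p (perm_mon \<sigma> m) = Poly_Mapping.lookup p m))"

(* A-subalgebra generated by a set G (A embedded as a \<mapsto> a\<cdot>1\<otimes>...\<otimes>1). *)
inductive_set gen_alg :: "('d::finite, 'r::finite, 'a::comm_ring_1) tens set \<Rightarrow> ('d, 'r, 'a) tens set"
  for G where
  scalar: "Poly_Mapping.single 0 a \<in> gen_alg G"
| gen: "g \<in> G \<Longrightarrow> g \<in> gen_alg G"
| add: "p \<in> gen_alg G \<Longrightarrow> q \<in> gen_alg G \<Longrightarrow> p + q \<in> gen_alg G"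
| mult: "p \<in> gen_alg G \<Longrightarrow> q \<in> gen_alg G \<Longrightarrow> p * q \<in> gen_alg G"

(* \<Gamma>^d_A(B)_{<\<gamma>}; on functions 'r \<Rightarrow> nat, < is componentwise \<le> and \<noteq>. *)
definition Gamma_less :: "('r::finite \<Rightarrow> nat) \<Rightarrow> ('d::finite, 'r, 'a::comm_ring_1) tens set" where
  "Gamma_less \<gamma> = gen_alg {p. symmetric p \<and> (\<exists>\<beta>. \<beta> < \<gamma> \<and> homogeneous \<beta> p)}"

end

theory Submission
  imports Defs "HOL-Computational_Algebra.Polynomial" "HOL-Combinatorics.Cycles"
begin

text \<open>
  Substituting \<open>x \<mapsto> x\<^sup>\<alpha>\<close> and base-changing from \<open>\<int>\<close> to \<open>A\<close> is a ring map preserving symmetry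
  and sending \<open>\<Gamma>\<^sub><\<^sub>n\<close> into \<open>\<Gamma>\<^sub><\<^sub>n\<^sub>\<alpha>\<close>, so it suffices to treat one variable over \<open>\<int>\<close>, where
  \<open>X = \<gamma>\<^sup>k(x\<^sup>m) \<times> \<gamma>\<^sup>d\<^sup>-\<^sup>k(1) - (-1)\<^sup>k\<^sup>m\<^sup>-\<^sup>k m \<gamma>\<^sup>k\<^sup>m(x) \<times> \<gamma>\<^sup>d\<^sup>-\<^sup>k\<^sup>m(1)\<close> is symmetric and homogeneous of degree \<open>n = km\<close>.
  Subtracting products \<open>\<gamma>\<^sup>l(x) \<times> \<gamma>\<^sup>d\<^sup>-\<^sup>l(1) \<cdot> (orbit sum)\<close> shows that every such element is
  \<open>c \<gamma>\<^sup>n(x) \<times> \<gamma>\<^sup>d\<^sup>-\<^sup>n(1)\<close> modulo \<open>\<Gamma>\<^sub><\<^sub>n\<close>.  Newton's identities, applied to \<open>x\<^sup>k\<^sup>m\<close> viewed as a \<open>km\<close>-th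
  and as a \<open>k\<close>-th power, give \<open>k X \<in> \<Gamma>\<^sub><\<^sub>n\<close>, hence \<open>kc \<gamma>\<^sup>n(x) \<times> \<gamma>\<^sup>d\<^sup>-\<^sup>n(1) \<in> \<Gamma>\<^sub><\<^sub>n\<close>.  Finally, evaluating
  the \<open>j\<close>-th factor at \<open>z\<^sub>j t\<close>, where \<open>z\<close> lists the \<open>n\<close>-th roots of unity on \<open>n\<close> positions, kills the
  coefficient of \<open>t\<^sup>n\<close> on \<open>\<Gamma>\<^sub><\<^sub>n\<close> (a symmetric element of degree \<open>0 < s < n\<close> is invariant under
  \<open>z \<mapsto> \<omega> z\<close>, a permutation, but scales by \<open>\<omega>\<^sup>s\<close>) while it is \<open>\<Prod> z\<^sub>j \<noteq> 0\<close> on \<open>\<gamma>\<^sup>n(x) \<times> \<gamma>\<^sup>d\<^sup>-\<^sup>n(1)\<close>.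
  So \<open>c = 0\<close>.  If \<open>km > d\<close> the second term vanishes.
\<close>


lemma lookup_tmon: "Poly_Mapping.lookup (tmon e) x = e (fst x) (snd x)"
  unfolding tmon_def by (subst lookup_Abs_poly_mapping) (auto simp: case_prod_beta)

lemma tmon_add: "tmon e + tmon e' = tmon (\<lambda>j i. e j i + e' j i)"
  by (simp add: poly_mapping_eq_iff fun_eq_iff lookup_tmon lookup_add)

lemma tmon_zero: "tmon (\<lambda>_ _. 0) = 0"
  by (simp add: poly_mapping_eq_iff fun_eq_iff lookup_tmon)

lemma mdeg_tmon: "mdeg (tmon e) = (\<lambda>i. \<Sum>j\<in>UNIV. e j i)"
  by (simp add: mdeg_def lookup_tmon)

lemma mdeg_add: "mdeg (a + b) = (\<lambda>i. mdeg a i + mdeg b i)"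
  by (simp add: mdeg_def fun_eq_iff lookup_add sum.distrib)

lemma lookup_ptensor: "Poly_Mapping.lookup (ptensor e) E = (if tmon e = E then 1 else 0)"
  by (simp add: ptensor_def lookup_single when_def)

lemma ptensor_mult: "ptensor e * ptensor e' = ptensor (\<lambda>j i. e j i + e' j i)"
  unfolding ptensor_def by (simp add: mult_single tmon_add)

lemma ptensor_zero: "ptensor (\<lambda>_ _. 0) = 1"
  unfolding ptensor_def by (simp add: tmon_zero)

lemma prod_ptensor: "(\<Prod>l\<in>S. ptensor (F l)) = ptensor (\<lambda>j i. \<Sum>l\<in>S. F l j i)"
  by (induction S rule: infinite_finite_induct) (simp_all add: ptensor_zero ptensor_mult)

lemma ptensor_power: "ptensor e ^ a = ptensor (\<lambda>j i. a * e j i)"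
  by (induction a) (simp_all add: ptensor_zero ptensor_mult)

lemma lookup_sum_ptensor:
  assumes "finite X"
  shows "Poly_Mapping.lookup (\<Sum>x\<in>X. ptensor (F x) :: ('d::finite, 'r::finite, 'a::comm_ring_1) tens) E
     = of_nat (card {x\<in>X. tmon (F x) = E})"
proof -
  have "Poly_Mapping.lookup (\<Sum>x\<in>X. ptensor (F x) :: ('d, 'r, 'a) tens) E
      = (\<Sum>x\<in>X. if tmon (F x) = E then 1 else 0)"
    by (simp add: lookup_sum lookup_ptensor)
  also have "\<dots> = of_nat (card (X \<inter> {x. tmon (F x) = E}))"
    using assms by (simp add: sum.If_cases)
  finally show ?thesis
    by (simp add: Int_def conj_commute)
qed

lemma lookup_single_0_mult:
  "Poly_Mapping.lookup (Poly_Mapping.single 0 c * p) k = c * Poly_Mapping.lookup p k"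
  by (simp add: mult_map_scale_conv_mult[symmetric] map.rep_eq when_def)

lemma keys_single_0_mult: "Poly_Mapping.keys (Poly_Mapping.single 0 c * p) \<subseteq> Poly_Mapping.keys p"
  by (auto simp: in_keys_iff lookup_single_0_mult)

lemma pm_expand: "p = (\<Sum>x\<in>Poly_Mapping.keys p. Poly_Mapping.single x (Poly_Mapping.lookup p x))"
  by (rule poly_mapping_eqI) (auto simp: lookup_sum lookup_single when_def in_keys_iff)


section \<open>Homomorphisms out of a monoid algebra\<close>

definition pm_lift :: "('k::monoid_add \<Rightarrow> 'b::comm_ring_1) \<Rightarrow> ('a::comm_ring_1 \<Rightarrow> 'b) \<Rightarrow> ('k \<Rightarrow>\<^sub>0 'a) \<Rightarrow> 'b"
  where "pm_lift W h p = (\<Sum>x\<in>Poly_Mapping.keys p. h (Poly_Mapping.lookup p x) * W x)"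

lemma pm_lift_superset:
  assumes "h 0 = 0" "finite K" "Poly_Mapping.keys p \<subseteq> K"
  shows "pm_lift W h p = (\<Sum>x\<in>K. h (Poly_Mapping.lookup p x) * W x)"
  unfolding pm_lift_def
  by (rule sum.mono_neutral_left) (use assms in \<open>auto simp: in_keys_iff\<close>)

lemma pm_lift_zero: "pm_lift W h 0 = 0"
  by (simp add: pm_lift_def)

lemma pm_lift_single: "h 0 = 0 \<Longrightarrow> pm_lift W h (Poly_Mapping.single k a) = h a * W k"
  by (subst pm_lift_superset[where K="{k}"]) auto

context
  fixes h :: "'a::comm_ring_1 \<Rightarrow> 'b::comm_ring_1"
  assumes h_0: "h 0 = 0" and h_add: "\<And>a b. h (a + b) = h a + h b"
begin

lemma pm_lift_add: "pm_lift W h (p + q) = pm_lift W h p + pm_lift W h q"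
proof -
  let ?K = "Poly_Mapping.keys p \<union> Poly_Mapping.keys q"
  have "pm_lift W h (p + q) = (\<Sum>x\<in>?K. h (Poly_Mapping.lookup (p + q) x) * W x)"
    by (rule pm_lift_superset) (use h_0 keys_add[of p q] in auto)
  also have "\<dots> = (\<Sum>x\<in>?K. h (Poly_Mapping.lookup p x) * W x)
      + (\<Sum>x\<in>?K. h (Poly_Mapping.lookup q x) * W x)"
    by (simp add: lookup_add h_add distrib_right sum.distrib)
  also have "\<dots> = pm_lift W h p + pm_lift W h q"
    by (subst (1 2) pm_lift_superset[symmetric]) (use h_0 in auto)
  finally show ?thesis .
qed

lemma pm_lift_sum: "pm_lift W h (\<Sum>i\<in>I. f i) = (\<Sum>i\<in>I. pm_lift W h (f i))"
  by (induction I rule: infinite_finite_induct) (simp_all add: pm_lift_zero pm_lift_add)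

lemma pm_lift_diff: "pm_lift W h (p - q) = pm_lift W h p - pm_lift W h q"
  using pm_lift_add[of W "p - q" q] by (simp add: algebra_simps)

lemma pm_lift_mult:
  assumes "\<And>a b. h (a * b) = h a * h b" and "\<And>x y. W (x + y) = W x * W y"
  shows "pm_lift W h (p * q) = pm_lift W h p * pm_lift W h q"
proof -
  have "p * q = (\<Sum>x\<in>Poly_Mapping.keys p. \<Sum>y\<in>Poly_Mapping.keys q.
      Poly_Mapping.single (x + y) (Poly_Mapping.lookup p x * Poly_Mapping.lookup q y))"
    by (subst pm_expand[of p], subst pm_expand[of q])
       (simp add: sum_distrib_left sum_distrib_right mult_single sum.swap[of _ "Poly_Mapping.keys q"])
  then have "pm_lift W h (p * q) = (\<Sum>x\<in>Poly_Mapping.keys p. \<Sum>y\<in>Poly_Mapping.keys q.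
      h (Poly_Mapping.lookup p x) * W x * (h (Poly_Mapping.lookup q y) * W y))"
    by (simp add: pm_lift_sum pm_lift_single h_0 assms mult_ac)
  also have "\<dots> = pm_lift W h p * pm_lift W h q"
    by (simp add: pm_lift_def sum_product)
  finally show ?thesis .
qed

end


lemma lookup_perm_mon: "Poly_Mapping.lookup (perm_mon \<sigma> m) x = Poly_Mapping.lookup m (\<sigma> (fst x), snd x)"
  unfolding perm_mon_def by (subst lookup_Abs_poly_mapping) (auto simp: case_prod_beta)

lemma perm_mon_add: "perm_mon \<sigma> (a + b) = perm_mon \<sigma> a + perm_mon \<sigma> b"
  by (simp add: poly_mapping_eq_iff fun_eq_iff lookup_perm_mon lookup_add)

lemma perm_mon_zero: "perm_mon \<sigma> 0 = 0"
  by (simp add: poly_mapping_eq_iff fun_eq_iff lookup_perm_mon)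

lemma perm_mon_inv_perm_mon:
  "\<sigma> permutes UNIV \<Longrightarrow> perm_mon \<sigma> (perm_mon (inv \<sigma>) m) = m"
  "\<sigma> permutes UNIV \<Longrightarrow> perm_mon (inv \<sigma>) (perm_mon \<sigma> m) = m"
  by (simp_all add: poly_mapping_eq_iff fun_eq_iff lookup_perm_mon permutes_inverses)

lemma perm_mon_tmon: "perm_mon \<sigma> (tmon e) = tmon (\<lambda>j i. e (\<sigma> j) i)"
  by (simp add: poly_mapping_eq_iff fun_eq_iff lookup_perm_mon lookup_tmon)

lemma symmetric_lookup_perm_mon:
  "symmetric p \<Longrightarrow> \<sigma> permutes UNIV \<Longrightarrow> Poly_Mapping.lookup p (perm_mon \<sigma> m) = Poly_Mapping.lookup p m"
  unfolding symmetric_def by blast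

lemma symmetric_bij_betw_keys:
  assumes "symmetric p" "\<sigma> permutes UNIV"
  shows "bij_betw (perm_mon \<sigma>) (Poly_Mapping.keys p) (Poly_Mapping.keys p)"
proof (rule bij_betw_byWitness[where f'="perm_mon (inv \<sigma>)"])
  show "\<forall>a\<in>Poly_Mapping.keys p. perm_mon (inv \<sigma>) (perm_mon \<sigma> a) = a"
    "\<forall>a\<in>Poly_Mapping.keys p. perm_mon \<sigma> (perm_mon (inv \<sigma>) a) = a"
    using perm_mon_inv_perm_mon[OF assms(2)] by auto
  show "perm_mon \<sigma> ` Poly_Mapping.keys p \<subseteq> Poly_Mapping.keys p"
    "perm_mon (inv \<sigma>) ` Poly_Mapping.keys p \<subseteq> Poly_Mapping.keys p"
    using symmetric_lookup_perm_mon[OF assms(1)] assms(2) permutes_inv[OF assms(2)]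
    by (auto simp: in_keys_iff)
qed

definition perm_tens :: "('d \<Rightarrow> 'd) \<Rightarrow> ('d::finite, 'r::finite, 'a::comm_ring_1) tens \<Rightarrow> ('d, 'r, 'a) tens"
  where "perm_tens \<sigma> = pm_lift (\<lambda>E. Poly_Mapping.single (perm_mon (inv \<sigma>) E) 1) (Poly_Mapping.single 0)"

lemma perm_tens_single: "perm_tens \<sigma> (Poly_Mapping.single E c) = Poly_Mapping.single (perm_mon (inv \<sigma>) E) c"
  unfolding perm_tens_def by (simp add: pm_lift_single mult_single)

lemma perm_tens_diff: "perm_tens \<sigma> (p - q) = perm_tens \<sigma> p - perm_tens \<sigma> q"
  unfolding perm_tens_def by (rule pm_lift_diff) (simp_all add: single_add)

lemma perm_tens_sum: "perm_tens \<sigma> (\<Sum>i\<in>I. f i) = (\<Sum>i\<in>I. perm_tens \<sigma> (f i))"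
  unfolding perm_tens_def by (rule pm_lift_sum) (simp_all add: single_add)

lemma perm_tens_mult: "perm_tens \<sigma> (p * q) = perm_tens \<sigma> p * perm_tens \<sigma> q"
  unfolding perm_tens_def by (rule pm_lift_mult) (simp_all add: single_add mult_single perm_mon_add)

lemma perm_tens_ptensor: "perm_tens \<sigma> (ptensor e) = ptensor (\<lambda>j i. e (inv \<sigma> j) i)"
  unfolding ptensor_def by (simp add: perm_tens_single perm_mon_tmon)

lemma lookup_perm_tens:
  assumes "\<sigma> permutes UNIV"
  shows "Poly_Mapping.lookup (perm_tens \<sigma> p) E = Poly_Mapping.lookup p (perm_mon \<sigma> E)"
proof -
  have eq: "perm_mon (inv \<sigma>) x = E \<longleftrightarrow> x = perm_mon \<sigma> E" for x
    using perm_mon_inv_perm_mon[OF assms] by metis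
  have "Poly_Mapping.lookup (perm_tens \<sigma> p) E
      = (\<Sum>x\<in>Poly_Mapping.keys p. Poly_Mapping.lookup p x when x = perm_mon \<sigma> E)"
    by (simp add: perm_tens_def pm_lift_def mult_single lookup_sum lookup_single eq)
  also have "\<dots> = Poly_Mapping.lookup p (perm_mon \<sigma> E)"
    by (cases "perm_mon \<sigma> E \<in> Poly_Mapping.keys p") (auto simp: when_def in_keys_iff)
  finally show ?thesis .
qed

lemma symmetric_iff_perm_tens: "symmetric p \<longleftrightarrow> (\<forall>\<sigma>. \<sigma> permutes UNIV \<longrightarrow> perm_tens \<sigma> p = p)"
  unfolding symmetric_def by (auto simp: poly_mapping_eq_iff fun_eq_iff lookup_perm_tens)

lemma symmetric_mult: "symmetric p \<Longrightarrow> symmetric q \<Longrightarrow> symmetric (p * q)"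
  by (simp add: symmetric_iff_perm_tens perm_tens_mult)

lemma symmetric_diff: "symmetric p \<Longrightarrow> symmetric q \<Longrightarrow> symmetric (p - q)"
  by (simp add: symmetric_iff_perm_tens perm_tens_diff)

lemma symmetric_single_0: "symmetric (Poly_Mapping.single 0 c)"
  by (simp add: symmetric_iff_perm_tens perm_tens_single perm_mon_zero)

lemma symmetric_sum_ptensor:
  fixes e :: "'v \<Rightarrow> 'd::finite \<Rightarrow> 'r::finite \<Rightarrow> nat"
  assumes "\<And>\<sigma>. \<sigma> permutes UNIV \<Longrightarrow>
      \<exists>g. bij_betw g V V \<and> (\<forall>v\<in>V. e (g v) = (\<lambda>j. e v (inv \<sigma> j)))"
  shows "symmetric (\<Sum>v\<in>V. ptensor (e v) :: ('d, 'r, 'a::comm_ring_1) tens)"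
  unfolding symmetric_iff_perm_tens
proof (intro allI impI)
  fix \<sigma> :: "'d \<Rightarrow> 'd" assume "\<sigma> permutes UNIV"
  then obtain g where g: "bij_betw g V V" "\<forall>v\<in>V. e (g v) = (\<lambda>j. e v (inv \<sigma> j))"
    using assms by blast
  have "perm_tens \<sigma> (\<Sum>v\<in>V. ptensor (e v) :: ('d, 'r, 'a) tens) = (\<Sum>v\<in>V. ptensor (e (g v)))"
    by (simp add: perm_tens_sum perm_tens_ptensor g(2))
  also have "\<dots> = (\<Sum>v\<in>V. ptensor (e v))"
    by (rule sum.reindex_bij_betw[OF g(1)])
  finally show "perm_tens \<sigma> (\<Sum>v\<in>V. ptensor (e v) :: ('d, 'r, 'a) tens) = (\<Sum>v\<in>V. ptensor (e v))" .
qed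


lemma homogeneous_ptensor: "homogeneous (\<lambda>i. \<Sum>j\<in>UNIV. e j i) (ptensor e)"
  unfolding homogeneous_def ptensor_def by (simp add: mdeg_tmon)

lemma homogeneous_mult:
  assumes "homogeneous \<beta> p" "homogeneous \<gamma> q"
  shows "homogeneous (\<lambda>i. \<beta> i + \<gamma> i) (p * q)"
  unfolding homogeneous_def
proof
  fix m assume "m \<in> Poly_Mapping.keys (p * q)"
  then obtain a b where "a \<in> Poly_Mapping.keys p" "b \<in> Poly_Mapping.keys q" "m = a + b"
    using keys_mult[of p q] by blast
  then show "mdeg m = (\<lambda>i. \<beta> i + \<gamma> i)"
    using assms unfolding homogeneous_def by (simp add: mdeg_add)
qed

lemma homogeneous_diff: "homogeneous \<beta> p \<Longrightarrow> homogeneous \<beta> q \<Longrightarrow> homogeneous \<beta> (p - q)"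
  unfolding homogeneous_def using keys_add[of p "- q"] by (auto simp: keys_minus)

lemma homogeneous_single_0_mult: "homogeneous \<beta> p \<Longrightarrow> homogeneous \<beta> (Poly_Mapping.single 0 c * p)"
  unfolding homogeneous_def using keys_single_0_mult by blast

lemma homogeneous_sum: "(\<And>i. i \<in> I \<Longrightarrow> homogeneous \<beta> (f i)) \<Longrightarrow> homogeneous \<beta> (\<Sum>i\<in>I. f i)"
  unfolding homogeneous_def using keys_sum[of f I] by blast


definition exps_on :: "'d set \<Rightarrow> ('r \<Rightarrow> nat) \<Rightarrow> 'd \<Rightarrow> 'r \<Rightarrow> nat"
  where "exps_on S \<beta> = (\<lambda>j. if j \<in> S then \<beta> else (\<lambda>_. 0))"

lemma gam_eq: "gam k \<beta> = (\<Sum>S \<in> {S. card S = k}. ptensor (exps_on S \<beta>))"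
  unfolding gam_def exps_on_def ..

lemma exps_on_empty: "exps_on {} \<beta> = (\<lambda>_ _. 0)"
  by (simp add: exps_on_def fun_eq_iff)

lemma gam_0: "(gam 0 \<beta> :: ('d::finite, 'r::finite, 'a::comm_ring_1) tens) = 1"
proof -
  have "{S :: 'd set. card S = 0} = {{}}" by (auto simp: card_eq_0_iff)
  then show ?thesis by (simp add: gam_eq exps_on_empty ptensor_zero)
qed

lemma gam_eq_0_if_card_less:
  assumes "card (UNIV :: 'd set) < k"
  shows "(gam k \<beta> :: ('d::finite, 'r::finite, 'a::comm_ring_1) tens) = 0"
proof -
  have "{S :: 'd set. card S = k} = {}"
    using assms card_mono[of "UNIV :: 'd set"] by (metis (mono_tags) empty_Collect_eq leD subset_UNIV finite_UNIV)
  then show ?thesis by (simp add: gam_eq)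
qed

lemma gam_zero_exponent:
  "(gam j (\<lambda>_. 0) :: ('d::finite, 'r::finite, 'a::comm_ring_1) tens) = of_nat (card {S::'d set. card S = j})"
  by (simp add: gam_eq exps_on_def ptensor_zero flip: of_nat_sum)

lemma symmetric_gam: "symmetric (gam k \<beta>)"
  unfolding gam_eq
proof (rule symmetric_sum_ptensor)
  fix \<sigma> :: "'d \<Rightarrow> 'd" assume \<sigma>: "\<sigma> permutes UNIV"
  have "bij_betw ((`) \<sigma>) {S. card S = k} {S. card S = k}"
  proof (rule bij_betw_byWitness[where f'="(`) (inv \<sigma>)"])
    show "\<forall>S\<in>{S. card S = k}. inv \<sigma> ` \<sigma> ` S = S" "\<forall>S\<in>{S. card S = k}. \<sigma> ` inv \<sigma> ` S = S"
      using permutes_inverses[OF \<sigma>] by (simp_all add: image_image)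
    show "(`) \<sigma> ` {S. card S = k} \<subseteq> {S. card S = k}" "(`) (inv \<sigma>) ` {S. card S = k} \<subseteq> {S. card S = k}"
      using \<sigma> permutes_inv[OF \<sigma>]
      by (auto simp: card_image permutes_inj inj_on_subset[OF permutes_inj[OF \<sigma>]]
                     intro!: card_image inj_on_subset[OF permutes_inj])
  qed
  moreover have "exps_on (\<sigma> ` S) \<beta> = (\<lambda>j. exps_on S \<beta> (inv \<sigma> j))" for S
    using permutes_inverses[OF \<sigma>] by (auto simp: exps_on_def fun_eq_iff image_iff)
  ultimately show "\<exists>g. bij_betw g {S. card S = k} {S. card S = k} \<and>
      (\<forall>S\<in>{S. card S = k}. exps_on (g S) \<beta> = (\<lambda>j. exps_on S \<beta> (inv \<sigma> j)))"
    by blast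
qed

lemma homogeneous_gam:
  "homogeneous (\<lambda>i. k * \<beta> i) (gam k \<beta> :: ('d::finite, 'r::finite, 'a::comm_ring_1) tens)"
  unfolding gam_eq
proof (rule homogeneous_sum)
  fix S :: "'d set" assume "S \<in> {S. card S = k}"
  then have "(\<lambda>i. \<Sum>j\<in>UNIV. exps_on S \<beta> j i) = (\<lambda>i. k * \<beta> i)"
    by (simp add: exps_on_def fun_eq_iff if_distrib[of "\<lambda>f. f _"] sum.If_cases Int_def)
  then show "homogeneous (\<lambda>i. k * \<beta> i) (ptensor (exps_on S \<beta>) :: ('d, 'r, 'a) tens)"
    using homogeneous_ptensor[of "exps_on S \<beta>"] by simp
qed


lemma Gamma_less_generator:
  "symmetric p \<Longrightarrow> homogeneous \<beta> p \<Longrightarrow> \<beta> < \<gamma> \<Longrightarrow> p \<in> Gamma_less \<gamma>"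
  unfolding Gamma_less_def by (rule gen_alg.gen) blast

lemma Gamma_less_add: "p \<in> Gamma_less \<gamma> \<Longrightarrow> q \<in> Gamma_less \<gamma> \<Longrightarrow> p + q \<in> Gamma_less \<gamma>"
  unfolding Gamma_less_def by (rule gen_alg.add)

lemma Gamma_less_mult: "p \<in> Gamma_less \<gamma> \<Longrightarrow> q \<in> Gamma_less \<gamma> \<Longrightarrow> p * q \<in> Gamma_less \<gamma>"
  unfolding Gamma_less_def by (rule gen_alg.mult)

lemma Gamma_less_single_0: "Poly_Mapping.single 0 c \<in> Gamma_less \<gamma>"
  unfolding Gamma_less_def by (rule gen_alg.scalar)

lemma Gamma_less_of_int: "of_int c \<in> Gamma_less \<gamma>"
  using Gamma_less_single_0[of "of_int c"] by simp

lemma Gamma_less_single_0_mult: "p \<in> Gamma_less \<gamma> \<Longrightarrow> Poly_Mapping.single 0 c * p \<in> Gamma_less \<gamma>"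
  by (rule Gamma_less_mult[OF Gamma_less_single_0])

lemma Gamma_less_of_int_mult: "p \<in> Gamma_less \<gamma> \<Longrightarrow> of_int c * p \<in> Gamma_less \<gamma>"
  by (rule Gamma_less_mult[OF Gamma_less_of_int])

lemma Gamma_less_uminus: "p \<in> Gamma_less \<gamma> \<Longrightarrow> - p \<in> Gamma_less \<gamma>"
  using Gamma_less_of_int_mult[of p \<gamma> "- 1"] by simp

lemma Gamma_less_diff: "p \<in> Gamma_less \<gamma> \<Longrightarrow> q \<in> Gamma_less \<gamma> \<Longrightarrow> p - q \<in> Gamma_less \<gamma>"
  using Gamma_less_add[OF _ Gamma_less_uminus] by fastforce

lemma Gamma_less_sum: "(\<And>i. i \<in> I \<Longrightarrow> f i \<in> Gamma_less \<gamma>) \<Longrightarrow> (\<Sum>i\<in>I. f i) \<in> Gamma_less \<gamma>"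
  by (induction I rule: infinite_finite_induct)
     (auto intro: Gamma_less_add Gamma_less_of_int[of 0, simplified])

lemma less_const_fun:
  assumes "(a::nat) < b"
  shows "(\<lambda>_::'r. a) < (\<lambda>_. b)"
proof -
  have "(\<lambda>_::'r. a) \<le> (\<lambda>_. b)" "\<not> (\<lambda>_::'r. b) \<le> (\<lambda>_. a)"
    using assms by (simp_all add: le_fun_def)
  then show ?thesis by (simp add: less_fun_def)
qed

lemma less_const_fun_unit_iff: "(\<beta> :: unit \<Rightarrow> nat) < (\<lambda>_. n) \<longleftrightarrow> \<beta> () < n"
proof
  assume "\<beta> < (\<lambda>_. n)"
  then have "\<not> (\<lambda>_. n) \<le> \<beta>"
    by (simp add: less_fun_def)
  then show "\<beta> () < n"
    by (auto simp: le_fun_def not_le)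
next
  assume "\<beta> () < n"
  then have "(\<lambda>_::unit. \<beta> ()) < (\<lambda>_. n)"
    by (rule less_const_fun)
  moreover have "\<beta> = (\<lambda>_. \<beta> ())"
    by (simp add: fun_eq_iff)
  ultimately show "\<beta> < (\<lambda>_. n)"
    by simp
qed

lemma less_fun_scale:
  fixes \<beta> :: "'r \<Rightarrow> nat"
  assumes "a < b" "\<beta> x \<noteq> 0"
  shows "(\<lambda>i. a * \<beta> i) < (\<lambda>i. b * \<beta> i)"
proof -
  have "(\<lambda>i. a * \<beta> i) \<le> (\<lambda>i. b * \<beta> i)"
    using assms by (simp add: le_fun_def)
  moreover have "\<not> (\<lambda>i. b * \<beta> i) \<le> (\<lambda>i. a * \<beta> i)"
    using assms by (auto simp: le_fun_def intro!: exI[of _ x])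
  ultimately show ?thesis by (simp add: less_fun_def)
qed


section \<open>Newton's identities\<close>

context
  fixes z :: "'d::finite \<Rightarrow> 'b::comm_ring_1"
begin

definition elem_sym :: "nat \<Rightarrow> 'b"
  where "elem_sym i = (\<Sum>S\<in>{S. card S = i}. \<Prod>l\<in>S. z l)"

definition power_sum :: "nat \<Rightarrow> 'b"
  where "power_sum a = (\<Sum>l\<in>UNIV. z l ^ a)"

text \<open>Splitting \<open>elem_sym i * power_sum a\<close> according to whether the extra index lies in the
  subset makes the alternating partial sums of Newton's identity telescope.\<close>

definition mixed_sum_out :: "nat \<Rightarrow> nat \<Rightarrow> 'b"
  where "mixed_sum_out i a = (\<Sum>S\<in>{S. card S = i}. \<Sum>l\<in>-S. (\<Prod>l\<in>S. z l) * z l ^ a)"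

definition mixed_sum_in :: "nat \<Rightarrow> nat \<Rightarrow> 'b"
  where "mixed_sum_in i a = (\<Sum>S\<in>{S. card S = i}. \<Sum>l\<in>S. (\<Prod>l\<in>S. z l) * z l ^ a)"

lemma elem_sym_mult_power_sum: "elem_sym i * power_sum a = mixed_sum_out i a + mixed_sum_in i a"
proof -
  have "(\<Sum>l\<in>UNIV. g l) = (\<Sum>l\<in>-S. g l) + (\<Sum>l\<in>S. g l)" for g :: "'d \<Rightarrow> 'b" and S
    using sum.union_disjoint[of "-S" S g] by (simp add: Compl_partition2)
  then show ?thesis
    unfolding elem_sym_def power_sum_def mixed_sum_out_def mixed_sum_in_def
      sum_product sum.distrib[symmetric]
    by (intro sum.cong) simp_all
qed

lemma mixed_sum_in_0: "mixed_sum_in 0 a = 0"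
proof -
  have "{S :: 'd set. card S = 0} = {{}}" by auto
  then show ?thesis by (simp add: mixed_sum_in_def)
qed

lemma mixed_sum_in_Suc: "mixed_sum_in (Suc i) a = mixed_sum_out i (Suc a)"
proof -
  let ?A = "Sigma {S :: 'd set. card S = i} uminus"
  let ?B = "Sigma {S :: 'd set. card S = Suc i} (\<lambda>S. S)"
  have bij: "bij_betw (\<lambda>(S, l). (insert l S, l)) ?A ?B"
    by (rule bij_betw_byWitness[where f'="\<lambda>(S,l). (S - {l}, l)"])
       (auto simp: card_Diff_singleton)
  have "mixed_sum_in (Suc i) a = (\<Sum>(S,l)\<in>?B. (\<Prod>l\<in>S. z l) * z l ^ a)"
    unfolding mixed_sum_in_def by (rule sum.Sigma) auto
  also have "\<dots> = (\<Sum>(S,l)\<in>?A. (\<Prod>l\<in>insert l S. z l) * z l ^ a)"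
    by (subst sum.reindex_bij_betw[OF bij, symmetric]) (simp add: case_prod_beta)
  also have "\<dots> = (\<Sum>(S,l)\<in>?A. (\<Prod>l\<in>S. z l) * z l ^ Suc a)"
    by (rule sum.cong) (auto simp: mult_ac)
  also have "\<dots> = mixed_sum_out i (Suc a)"
    unfolding mixed_sum_out_def by (rule sum.Sigma[symmetric]) auto
  finally show ?thesis .
qed

lemma mixed_sum_in_power_0: "mixed_sum_in i 0 = of_nat i * elem_sym i"
  unfolding mixed_sum_in_def elem_sym_def sum_distrib_left by (rule sum.cong) auto

lemma newton_partial:
  assumes "t < j"
  shows "(\<Sum>i\<le>t. (-1)^i * elem_sym i * power_sum (j - i)) = (-1)^t * mixed_sum_out t (j - t)"
  using assms
proof (induction t)
  case 0 then show ?case by (simp add: elem_sym_mult_power_sum mixed_sum_in_0)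
next
  case (Suc t)
  have "(\<Sum>i\<le>Suc t. (-1)^i * elem_sym i * power_sum (j - i))
      = (-1)^t * mixed_sum_out t (j - t) + (-1)^Suc t * (elem_sym (Suc t) * power_sum (j - Suc t))"
    using Suc by (simp add: mult.assoc)
  also have "\<dots> = (-1)^Suc t * mixed_sum_out (Suc t) (j - Suc t)"
    using Suc.prems
    by (simp add: elem_sym_mult_power_sum mixed_sum_in_Suc Suc_diff_Suc algebra_simps)
  finally show ?case .
qed

lemma newton_identity:
  assumes "0 < j"
  shows "(\<Sum>i<j. (-1)^i * elem_sym i * power_sum (j - i)) = (-1)^(j-1) * of_nat j * elem_sym j"
proof -
  have "{..<j} = {..j-1}" using assms by auto
  then have "(\<Sum>i<j. (-1)^i * elem_sym i * power_sum (j - i)) = (-1)^(j-1) * mixed_sum_out (j-1) 1"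
    using newton_partial[of "j-1" j] assms by simp
  also have "mixed_sum_out (j-1) 1 = of_nat j * elem_sym j"
    using mixed_sum_in_Suc[of "j-1" 0] mixed_sum_in_power_0[of j] assms by simp
  finally show ?thesis by (simp add: mult_ac)
qed

end

lemma elem_sym_ptensor_exps_on:
  "elem_sym (\<lambda>l. ptensor (exps_on {l} \<beta>)) i = (gam i \<beta> :: ('d::finite, 'r::finite, 'a::comm_ring_1) tens)"
proof -
  have "(\<Sum>l\<in>S. exps_on {l} \<beta> j x) = exps_on S \<beta> j x" for S :: "'d set" and j x
    by (simp add: exps_on_def if_distrib[of "\<lambda>f. f x"] sum.delta)
  then show ?thesis
    unfolding elem_sym_def gam_eq by (simp add: prod_ptensor)
qed

lemma power_sum_ptensor_exps_on:
  "power_sum (\<lambda>l. ptensor (exps_on {l} \<beta>)) a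
     = (gam 1 (\<lambda>i. a * \<beta> i) :: ('d::finite, 'r::finite, 'a::comm_ring_1) tens)"
proof -
  have "{S :: 'd set. card S = 1} = (\<lambda>l. {l}) ` UNIV"
    by (auto simp: card_1_singleton_iff)
  moreover have "(\<lambda>j i. a * exps_on {l} \<beta> j i) = exps_on {l} (\<lambda>i. a * \<beta> i)" for l :: 'd
    by (simp add: exps_on_def fun_eq_iff)
  ultimately show ?thesis
    unfolding power_sum_def gam_eq by (simp add: ptensor_power sum.reindex)
qed

text \<open>Newton's identity for the elements \<open>x\<^sup>\<beta>\<close> sitting in a single tensor factor: apart from
  \<open>\<gamma>\<^sup>1(x\<^sup>j\<^sup>\<beta>)\<close> and \<open>\<gamma>\<^sup>j(x\<^sup>\<beta>)\<close>, all its terms are products of elements of smaller degree.\<close>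

lemma newton_Gamma_less:
  assumes "0 < j" "\<beta> x \<noteq> 0"
  shows "(gam 1 (\<lambda>i. j * \<beta> i) :: ('d::finite, 'r::finite, 'a::comm_ring_1) tens)
           - (-1)^(j-1) * of_nat j * gam j \<beta> \<in> Gamma_less (\<lambda>i. j * \<beta> i)"
proof -
  let ?t = "\<lambda>i. (-1)^i * gam i \<beta> * gam 1 (\<lambda>x. (j - i) * \<beta> x) :: ('d, 'r, 'a) tens"
  have "(\<Sum>i<j. ?t i) = (-1)^(j-1) * of_nat j * gam j \<beta>"
    using newton_identity[OF assms(1), of "\<lambda>l. ptensor (exps_on {l} \<beta>)"]
    by (simp add: elem_sym_ptensor_exps_on power_sum_ptensor_exps_on)
  moreover have "{..<j} = insert 0 {1..<j}"
    using assms by auto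
  ultimately have sum_eq: "gam 1 (\<lambda>i. j * \<beta> i) + (\<Sum>i\<in>{1..<j}. ?t i) = (-1)^(j-1) * of_nat j * gam j \<beta>"
    by (simp add: gam_0)
  then have eq: "gam 1 (\<lambda>i. j * \<beta> i) - (-1)^(j-1) * of_nat j * gam j \<beta> = - (\<Sum>i\<in>{1..<j}. ?t i)"
    unfolding sum_eq[symmetric] by simp
  have "?t i \<in> Gamma_less (\<lambda>i. j * \<beta> i)" if "i \<in> {1..<j}" for i
  proof -
    have "gam i \<beta> \<in> Gamma_less (\<lambda>i. j * \<beta> i)"
      using that assms
      by (intro Gamma_less_generator[OF symmetric_gam homogeneous_gam] less_fun_scale) auto
    moreover have "gam 1 (\<lambda>x. (j - i) * \<beta> x) \<in> Gamma_less (\<lambda>i. j * \<beta> i)"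
      using that assms homogeneous_gam[of 1 "\<lambda>x. (j - i) * \<beta> x"]
      by (intro Gamma_less_generator[OF symmetric_gam _ less_fun_scale]) auto
    ultimately have "of_int ((-1)^i) * (gam i \<beta> * gam 1 (\<lambda>x. (j - i) * \<beta> x)) \<in> Gamma_less (\<lambda>i. j * \<beta> i)"
      by (intro Gamma_less_of_int_mult Gamma_less_mult)
    then show ?thesis
      by (simp add: mult.assoc)
  qed
  then show ?thesis
    unfolding eq by (intro Gamma_less_uminus Gamma_less_sum)
qed


section \<open>Symmetric tensors in one variable\<close>

lemma count_image_mset_mset_set:
  "finite A \<Longrightarrow> count (image_mset f (mset_set A)) b = card (A \<inter> f -` {b})"
  by (simp add: count_image_mset Int_commute)

lemma exists_permutes_subset_to_subset:
  assumes "finite A" "X \<subseteq> A" "Y \<subseteq> A" "card X = card Y"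
  obtains p where "p permutes A" "\<forall>x\<in>A. x \<in> X \<longleftrightarrow> p x \<in> Y"
proof -
  have "image_mset (\<lambda>x. x \<in> X) (mset_set A) = image_mset (\<lambda>x. x \<in> Y) (mset_set A)"
  proof (rule multiset_eqI)
    fix b :: bool
    have "A \<inter> (\<lambda>x. x \<in> X) -` {b} = (if b then X else A - X)"
      "A \<inter> (\<lambda>x. x \<in> Y) -` {b} = (if b then Y else A - Y)"
      using assms by auto
    then show "count (image_mset (\<lambda>x. x \<in> X) (mset_set A)) b = count (image_mset (\<lambda>x. x \<in> Y) (mset_set A)) b"
      using assms finite_subset[OF _ assms(1)]
      by (simp add: count_image_mset_mset_set card_Diff_subset)
  qed
  then show ?thesis
    using image_mset_eq_implies_permutes[OF assms(1)] that by metis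
qed

lemma exists_permutes_of_decremented:
  fixes u w :: "'d::finite \<Rightarrow> nat"
  assumes \<pi>: "\<pi> permutes UNIV"
    and card_eq: "card {j. w j \<noteq> 0} = card {j. u j \<noteq> 0}"
    and decr: "\<And>j. w j - 1 = u (\<pi> j) - 1"
  obtains \<sigma> where "\<sigma> permutes UNIV" "\<And>j. w j = u (\<sigma> j)"
proof -
  define K where "K = {j. w j > 1}"
  define X where "X = {j. w j \<noteq> 0}"
  define Y where "Y = {j. u (\<pi> j) \<noteq> 0}"
  have "\<pi> ` Y = {j. u j \<noteq> 0}"
    using permutes_inverses[OF \<pi>] unfolding Y_def by (auto intro: image_eqI[where x="inv \<pi> _"])
  then have "card Y = card X"
    using card_image[OF inj_on_subset[OF permutes_inj[OF \<pi>] subset_UNIV, of Y]] card_eq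
    by (simp add: X_def)
  moreover have "K \<subseteq> X"
    by (auto simp: K_def X_def)
  moreover have "K \<subseteq> Y"
  proof
    fix j assume "j \<in> K"
    then show "j \<in> Y" using decr[of j] by (simp add: K_def Y_def)
  qed
  ultimately have "card (X - K) = card (Y - K)"
    by (simp add: card_Diff_subset)
  then obtain p where p: "p permutes (-K)" "\<forall>x\<in>-K. x \<in> X - K \<longleftrightarrow> p x \<in> Y - K"
    using exists_permutes_subset_to_subset[of "-K" "X - K" "Y - K"] by auto
  have "w j = u (\<pi> (p j))" for j
  proof (cases "j \<in> K")
    case True
    then show ?thesis
      using p(1) decr[of j] by (simp add: permutes_not_in K_def)
  next
    case False
    then have "p j \<notin> K"
      using p(1) by (metis ComplD ComplI permutes_in_image)
    moreover have "u (\<pi> (p j)) \<le> 1"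
      using decr[of "p j"] calculation by (simp add: K_def)
    moreover have "j \<in> X \<longleftrightarrow> p j \<in> Y"
      using p(2) False calculation(1) by blast
    ultimately show ?thesis
      using False unfolding K_def X_def Y_def by simp arith
  qed
  then show ?thesis
    using that permutes_compose[OF permutes_subset[OF p(1)] \<pi>] by (metis comp_apply subset_UNIV)
qed


definition exp_vec :: "(('d \<times> unit) \<Rightarrow>\<^sub>0 nat) \<Rightarrow> 'd \<Rightarrow> nat"
  where "exp_vec E j = Poly_Mapping.lookup E (j, ())"

definition exp_supp :: "(('d \<times> unit) \<Rightarrow>\<^sub>0 nat) \<Rightarrow> 'd set"
  where "exp_supp E = {j. exp_vec E j \<noteq> 0}"

lemma tmon_eq_iff_exp_vec: "tmon e = E \<longleftrightarrow> (\<forall>j. e j () = exp_vec E j)"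
  by (auto simp: poly_mapping_eq_iff fun_eq_iff lookup_tmon exp_vec_def)

lemma exp_vec_add: "exp_vec (E + E') j = exp_vec E j + exp_vec E' j"
  by (simp add: exp_vec_def lookup_add)

lemma exp_vec_perm_mon: "exp_vec (perm_mon \<sigma> E) j = exp_vec E (\<sigma> j)"
  by (simp add: exp_vec_def lookup_perm_mon)

lemma homogeneous_unit_iff:
  "homogeneous (\<lambda>_. n) f \<longleftrightarrow> (\<forall>E\<in>Poly_Mapping.keys f. (\<Sum>j\<in>UNIV. exp_vec E j) = n)"
  unfolding homogeneous_def mdeg_def exp_vec_def by (simp add: fun_eq_iff)

lemma symmetric_lookup_eq:
  assumes "symmetric f" "\<sigma> permutes UNIV" "\<And>j. exp_vec E' j = exp_vec E (\<sigma> j)"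
  shows "Poly_Mapping.lookup f E' = Poly_Mapping.lookup f E"
proof -
  have "E' = perm_mon \<sigma> E"
    using assms(3) by (auto simp: poly_mapping_eq_iff fun_eq_iff exp_vec_def lookup_perm_mon)
  then show ?thesis
    using symmetric_lookup_perm_mon[OF assms(1,2)] by simp
qed

lemma sum_eq_sum_diff_1_plus_card:
  fixes w :: "'d::finite \<Rightarrow> nat"
  shows "(\<Sum>j\<in>UNIV. w j) = (\<Sum>j\<in>UNIV. w j - 1) + card {j. w j \<noteq> 0}"
proof -
  have "(\<Sum>j\<in>UNIV. w j) = (\<Sum>j\<in>UNIV. (w j - 1) + (if w j \<noteq> 0 then 1 else 0))"
    by (rule sum.cong) auto
  then show ?thesis
    by (simp add: sum.distrib sum.If_cases Int_def)
qed

lemma card_exp_supp_le_degree: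
  "card (exp_supp (E :: ('d::finite \<times> unit) \<Rightarrow>\<^sub>0 nat)) \<le> (\<Sum>j\<in>UNIV. exp_vec E j)"
  using sum_eq_sum_diff_1_plus_card[of "exp_vec E"] by (simp add: exp_supp_def)

definition perm_orbit :: "('d \<Rightarrow> nat) \<Rightarrow> ('d \<Rightarrow> nat) set"
  where "perm_orbit \<mu> = (\<lambda>\<pi>. \<mu> \<circ> \<pi>) ` {\<pi>. \<pi> permutes UNIV}"

lemma finite_perm_orbit: "finite (perm_orbit (\<mu> :: 'd::finite \<Rightarrow> nat))"
  unfolding perm_orbit_def by (simp add: finite_permutations)

definition orbit_sum :: "('d::finite \<Rightarrow> nat) \<Rightarrow> ('d, unit, 'a::comm_ring_1) tens"
  where "orbit_sum \<mu> = (\<Sum>v\<in>perm_orbit \<mu>. ptensor (\<lambda>j _. v j))"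

lemma orbit_sum_zero: "(orbit_sum (\<lambda>_. 0) :: ('d::finite, unit, 'a::comm_ring_1) tens) = 1"
proof -
  have "perm_orbit (\<lambda>_::'d. 0::nat) = {\<lambda>_. 0}"
    unfolding perm_orbit_def using permutes_id by (auto simp: comp_def intro!: image_eqI[where x=id])
  then show ?thesis
    by (simp add: orbit_sum_def ptensor_zero)
qed

lemma symmetric_orbit_sum: "symmetric (orbit_sum \<mu> :: ('d::finite, unit, 'a::comm_ring_1) tens)"
  unfolding orbit_sum_def
proof (rule symmetric_sum_ptensor)
  fix \<sigma> :: "'d \<Rightarrow> 'd" assume \<sigma>: "\<sigma> permutes UNIV"
  have "bij_betw (\<lambda>v. v \<circ> inv \<sigma>) (perm_orbit \<mu>) (perm_orbit \<mu>)"
  proof (rule bij_betw_byWitness[where f'="\<lambda>v. v \<circ> \<sigma>"])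
    show "\<forall>v\<in>perm_orbit \<mu>. v \<circ> inv \<sigma> \<circ> \<sigma> = v" "\<forall>v\<in>perm_orbit \<mu>. v \<circ> \<sigma> \<circ> inv \<sigma> = v"
      using permutes_inv_o[OF \<sigma>] by (simp_all add: comp_assoc)
    show "(\<lambda>v. v \<circ> inv \<sigma>) ` perm_orbit \<mu> \<subseteq> perm_orbit \<mu>" "(\<lambda>v. v \<circ> \<sigma>) ` perm_orbit \<mu> \<subseteq> perm_orbit \<mu>"
      using permutes_compose[OF permutes_inv[OF \<sigma>]] permutes_compose[OF \<sigma>]
      by (auto simp: perm_orbit_def comp_assoc)
  qed
  then show "\<exists>g. bij_betw g (perm_orbit \<mu>) (perm_orbit \<mu>) \<and>
      (\<forall>v\<in>perm_orbit \<mu>. (\<lambda>j _. g v j) = (\<lambda>j. (\<lambda>j _. v j) (inv \<sigma> j)))"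
    by (intro exI[of _ "\<lambda>v. v \<circ> inv \<sigma>"]) auto
qed

lemma homogeneous_orbit_sum:
  "homogeneous (\<lambda>_. \<Sum>j\<in>UNIV. \<mu> j) (orbit_sum \<mu> :: ('d::finite, unit, 'a::comm_ring_1) tens)"
  unfolding orbit_sum_def
proof (rule homogeneous_sum)
  fix v assume "v \<in> perm_orbit \<mu>"
  then obtain \<pi> where "\<pi> permutes UNIV" "v = \<mu> \<circ> \<pi>"
    unfolding perm_orbit_def by auto
  then have "(\<Sum>j\<in>UNIV. v j) = (\<Sum>j\<in>UNIV. \<mu> j)"
    using sum.permute[of \<pi> UNIV \<mu>] by simp
  moreover have "homogeneous (\<lambda>_. \<Sum>j\<in>UNIV. v j) (ptensor (\<lambda>j (_::unit). v j) :: ('d, unit, 'a) tens)"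
    by (rule homogeneous_ptensor)
  ultimately show "homogeneous (\<lambda>_. \<Sum>j\<in>UNIV. \<mu> j) (ptensor (\<lambda>j _. v j) :: ('d, unit, 'a) tens)"
    by simp
qed


lemma gam_mult_orbit_sum:
  "(gam l (\<lambda>_. 1) * orbit_sum \<mu> :: ('d::finite, unit, 'a::comm_ring_1) tens)
     = (\<Sum>x\<in>{S. card S = l} \<times> perm_orbit \<mu>. ptensor (\<lambda>j _. (if j \<in> fst x then 1 else 0) + snd x j))"
  unfolding gam_eq orbit_sum_def sum_product sum.cartesian_product
  by (intro sum.cong refl) (auto simp: ptensor_mult exps_on_def intro!: arg_cong[where f=ptensor])

lemma indicator_plus_eq_exp_vec:
  fixes E :: "('d::finite \<times> unit) \<Rightarrow>\<^sub>0 nat"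
  assumes eq: "\<And>j. (if j \<in> S then 1 else 0) + v j = exp_vec E j"
  shows "S \<subseteq> exp_supp E"
    and "card S = card (exp_supp E) \<Longrightarrow> S = exp_supp E \<and> v = (\<lambda>j. exp_vec E j - 1)"
proof -
  show sub: "S \<subseteq> exp_supp E"
  proof
    fix j assume "j \<in> S"
    then show "j \<in> exp_supp E" using eq[of j] by (simp add: exp_supp_def)
  qed
  assume "card S = card (exp_supp E)"
  then have S: "S = exp_supp E"
    using sub by (intro card_subset_eq) simp_all
  have "v j = exp_vec E j - 1" for j
    using eq[of j] by (cases "j \<in> S") (simp_all add: S exp_supp_def)
  with S show "S = exp_supp E \<and> v = (\<lambda>j. exp_vec E j - 1)" by blast
qed

lemma card_exp_supp_ge_if_in_keys_gam_mult_orbit_sum: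
  assumes "E \<in> Poly_Mapping.keys (gam l (\<lambda>_. 1) * orbit_sum \<mu> :: ('d::finite, unit, 'a::comm_ring_1) tens)"
  shows "l \<le> card (exp_supp E)"
proof -
  let ?T = "{x \<in> {S :: 'd set. card S = l} \<times> perm_orbit \<mu>.
              tmon (\<lambda>j _. (if j \<in> fst x then 1 else 0) + snd x j) = E}"
  have "of_nat (card ?T) \<noteq> (0::'a)"
    using assms unfolding gam_mult_orbit_sum in_keys_iff
    by (simp add: lookup_sum_ptensor finite_perm_orbit)
  then have "?T \<noteq> {}"
    by (metis card.empty of_nat_0)
  then obtain S v where "card S = l" "\<forall>j. (if j \<in> S then 1 else 0) + v j = exp_vec E j"
    unfolding tmon_eq_iff_exp_vec by auto
  then show ?thesis
    using indicator_plus_eq_exp_vec(1)[of S v E] card_mono[of "exp_supp E" S] by simp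
qed

lemma lookup_gam_mult_orbit_sum:
  assumes "card (exp_supp E) = l"
  shows "Poly_Mapping.lookup (gam l (\<lambda>_. 1) * orbit_sum \<mu> :: ('d::finite, unit, 'a::comm_ring_1) tens) E
      = (if (\<lambda>j. exp_vec E j - 1) \<in> perm_orbit \<mu> then 1 else 0)"
proof -
  let ?X = "{S :: 'd set. card S = l} \<times> perm_orbit \<mu>"
  let ?v = "\<lambda>j. exp_vec E j - 1"
  have fill: "(if j \<in> exp_supp E then 1 else 0) + ?v j = exp_vec E j" for j
    by (simp add: exp_supp_def)
  have iff: "(S, v) \<in> ?X \<and> tmon (\<lambda>j _. (if j \<in> S then 1 else 0) + v j) = E
      \<longleftrightarrow> (S, v) = (exp_supp E, ?v) \<and> ?v \<in> perm_orbit \<mu>" for S v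
  proof
    assume H: "(S, v) \<in> ?X \<and> tmon (\<lambda>j _. (if j \<in> S then 1 else 0) + v j) = E"
    then have "\<forall>j. (if j \<in> S then 1 else 0) + v j = exp_vec E j"
      using H[THEN conjunct2, unfolded tmon_eq_iff_exp_vec] by simp
    then show "(S, v) = (exp_supp E, ?v) \<and> ?v \<in> perm_orbit \<mu>"
      using indicator_plus_eq_exp_vec(2)[of S v E] assms H by auto
  next
    assume "(S, v) = (exp_supp E, ?v) \<and> ?v \<in> perm_orbit \<mu>"
    then show "(S, v) \<in> ?X \<and> tmon (\<lambda>j _. (if j \<in> S then 1 else 0) + v j) = E"
      using assms fill by (simp only: tmon_eq_iff_exp_vec) simp
  qed
  have "{x\<in>?X. tmon (\<lambda>j _. (if j \<in> fst x then 1 else 0) + snd x j) = E}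
      = (if ?v \<in> perm_orbit \<mu> then {(exp_supp E, ?v)} else {})"
  proof (intro set_eqI)
    fix x :: "'d set \<times> ('d \<Rightarrow> nat)"
    obtain S v where x: "x = (S, v)" by (cases x)
    show "x \<in> {x\<in>?X. tmon (\<lambda>j _. (if j \<in> fst x then 1 else 0) + snd x j) = E}
        \<longleftrightarrow> x \<in> (if ?v \<in> perm_orbit \<mu> then {(exp_supp E, ?v)} else {})"
      by (simp only: x mem_Collect_eq fst_conv snd_conv iff) simp
  qed
  then show ?thesis
    unfolding gam_mult_orbit_sum by (simp add: lookup_sum_ptensor finite_perm_orbit)
qed


definition symmetric_width_ge :: "nat \<Rightarrow> nat \<Rightarrow> ('d::finite, unit, 'a::comm_ring_1) tens \<Rightarrow> bool"
  where "symmetric_width_ge n l f \<longleftrightarrow> symmetric f \<and> homogeneous (\<lambda>_. n) f \<and>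
           (\<forall>E\<in>Poly_Mapping.keys f. l \<le> card (exp_supp E))"

lemma sum_exp_vec_diff_1:
  "(\<Sum>j\<in>UNIV. exp_vec E j - 1) = (\<Sum>j\<in>UNIV. exp_vec E j) - card (exp_supp (E :: ('d::finite \<times> unit) \<Rightarrow>\<^sub>0 nat))"
  using sum_eq_sum_diff_1_plus_card[of "exp_vec E"] by (simp add: exp_supp_def)

text \<open>For a monomial \<open>x\<^sup>a\<close> with \<open>l\<close> nonzero exponents, \<open>\<gamma>\<^sup>l(x) \<times> \<gamma>\<^sup>d\<^sup>-\<^sup>l(1)\<close> times the orbit sum of \<open>a - 1\<close>:
  its monomials have at least \<open>l\<close> nonzero exponents, and those with exactly \<open>l\<close> form the orbit
  of \<open>x\<^sup>a\<close>, each with coefficient \<open>1\<close>.\<close>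

definition leading_orbit_sum :: "(('d \<times> unit) \<Rightarrow>\<^sub>0 nat) \<Rightarrow> ('d::finite, unit, 'a::comm_ring_1) tens"
  where "leading_orbit_sum a = gam (card (exp_supp a)) (\<lambda>_. 1) * orbit_sum (\<lambda>j. exp_vec a j - 1)"

lemma symmetric_leading_orbit_sum: "symmetric (leading_orbit_sum a)"
  unfolding leading_orbit_sum_def by (intro symmetric_mult symmetric_gam symmetric_orbit_sum)

lemma homogeneous_leading_orbit_sum:
  "homogeneous (\<lambda>_. \<Sum>j\<in>UNIV. exp_vec a j) (leading_orbit_sum a :: ('d::finite, unit, 'a::comm_ring_1) tens)"
proof -
  have "card (exp_supp a) + (\<Sum>j\<in>UNIV. exp_vec a j - 1) = (\<Sum>j\<in>UNIV. exp_vec a j)"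
    using sum_exp_vec_diff_1[of a] card_exp_supp_le_degree[of a] by simp
  then show ?thesis
    using homogeneous_mult[OF homogeneous_gam[of "card (exp_supp a)" "\<lambda>_::unit. 1::nat"]
        homogeneous_orbit_sum[of "\<lambda>j. exp_vec a j - 1"]]
    by (simp add: leading_orbit_sum_def)
qed

lemma card_exp_supp_ge_if_in_keys_leading_orbit_sum:
  "E \<in> Poly_Mapping.keys (leading_orbit_sum a :: ('d::finite, unit, 'a::comm_ring_1) tens)
     \<Longrightarrow> card (exp_supp a) \<le> card (exp_supp E)"
  unfolding leading_orbit_sum_def by (rule card_exp_supp_ge_if_in_keys_gam_mult_orbit_sum)

lemma lookup_leading_orbit_sum:
  assumes "card (exp_supp E) = card (exp_supp a)"
  shows "Poly_Mapping.lookup (leading_orbit_sum a :: ('d::finite, unit, 'a::comm_ring_1) tens) E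
      = (if \<exists>\<sigma>. \<sigma> permutes UNIV \<and> (\<forall>j. exp_vec E j = exp_vec a (\<sigma> j)) then 1 else 0)"
proof -
  have "(\<lambda>j. exp_vec E j - 1) \<in> perm_orbit (\<lambda>j. exp_vec a j - 1)
      \<longleftrightarrow> (\<exists>\<sigma>. \<sigma> permutes UNIV \<and> (\<forall>j. exp_vec E j = exp_vec a (\<sigma> j)))"
  proof
    assume "(\<lambda>j. exp_vec E j - 1) \<in> perm_orbit (\<lambda>j. exp_vec a j - 1)"
    then obtain \<pi> where \<pi>: "\<pi> permutes UNIV" "\<And>j. exp_vec E j - 1 = exp_vec a (\<pi> j) - 1"
      unfolding perm_orbit_def by (auto simp: fun_eq_iff)
    then show "\<exists>\<sigma>. \<sigma> permutes UNIV \<and> (\<forall>j. exp_vec E j = exp_vec a (\<sigma> j))"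
      using exists_permutes_of_decremented[OF \<pi>(1)] assms by (metis exp_supp_def)
  next
    assume "\<exists>\<sigma>. \<sigma> permutes UNIV \<and> (\<forall>j. exp_vec E j = exp_vec a (\<sigma> j))"
    then show "(\<lambda>j. exp_vec E j - 1) \<in> perm_orbit (\<lambda>j. exp_vec a j - 1)"
      unfolding perm_orbit_def by (auto simp: comp_def)
  qed
  then show ?thesis
    unfolding leading_orbit_sum_def lookup_gam_mult_orbit_sum[OF assms] by simp
qed

lemma leading_orbit_sum_cases:
  assumes "(\<Sum>j\<in>UNIV. exp_vec a j) = n" "0 < n"
  shows "(leading_orbit_sum a :: ('d::finite, unit, 'a::comm_ring_1) tens) \<in> Gamma_less (\<lambda>_. n)
    \<or> leading_orbit_sum a = gam n (\<lambda>_. 1)"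
proof (cases "card (exp_supp a) < n")
  case True
  have "exp_supp a \<noteq> {}"
  proof
    assume "exp_supp a = {}"
    then have "\<forall>j. exp_vec a j = 0" by (auto simp: exp_supp_def)
    then show False using assms by simp
  qed
  then have "0 < card (exp_supp a)"
    by (simp add: card_gt_0_iff)
  then have "(gam (card (exp_supp a)) (\<lambda>_. 1) :: ('d, unit, 'a) tens) \<in> Gamma_less (\<lambda>_. n)"
    using True homogeneous_gam[of "card (exp_supp a)" "\<lambda>_::unit. 1::nat"]
    by (intro Gamma_less_generator[OF symmetric_gam _ less_const_fun]) simp_all
  moreover have "(orbit_sum (\<lambda>j. exp_vec a j - 1) :: ('d, unit, 'a) tens) \<in> Gamma_less (\<lambda>_. n)"
    using True \<open>0 < card (exp_supp a)\<close> assms(1) sum_exp_vec_diff_1[of a]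
    by (intro Gamma_less_generator[OF symmetric_orbit_sum homogeneous_orbit_sum less_const_fun]) simp
  ultimately show ?thesis
    unfolding leading_orbit_sum_def by (simp add: Gamma_less_mult)
next
  case False
  then have "card (exp_supp a) = n" "(\<lambda>j. exp_vec a j - 1) = (\<lambda>_. 0)"
    using card_exp_supp_le_degree[of a] sum_exp_vec_diff_1[of a] assms(1) by auto
  then show ?thesis
    by (simp add: leading_orbit_sum_def orbit_sum_zero)
qed

text \<open>Subtracting the right multiple of \<open>leading_orbit_sum a\<close> from a symmetric \<open>f\<close> removes the
  orbit of a monomial \<open>x\<^sup>a\<close> of minimal width \<open>l\<close> and creates no new monomial of width \<open>\<le> l\<close>.\<close>

lemma symmetric_width_ge_reduce:
  fixes f :: "('d::finite, unit, 'a::comm_ring_1) tens"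
  assumes f: "symmetric_width_ge n l f" and a: "a \<in> Poly_Mapping.keys f" "card (exp_supp a) = l"
  shows "symmetric_width_ge n l (f - Poly_Mapping.single 0 (Poly_Mapping.lookup f a) * leading_orbit_sum a)"
proof -
  let ?P = "leading_orbit_sum a :: ('d, unit, 'a) tens"
  have "homogeneous (\<lambda>_. n) f" "symmetric f" "\<forall>E\<in>Poly_Mapping.keys f. l \<le> card (exp_supp E)"
    using f unfolding symmetric_width_ge_def by auto
  moreover have "homogeneous (\<lambda>_. n) ?P"
    using calculation(1) a(1) homogeneous_leading_orbit_sum[of a] unfolding homogeneous_unit_iff by auto
  moreover have "\<forall>E\<in>Poly_Mapping.keys ?P. l \<le> card (exp_supp E)"
    using card_exp_supp_ge_if_in_keys_leading_orbit_sum a(2) by blast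
  moreover have "Poly_Mapping.keys (f - Poly_Mapping.single 0 (Poly_Mapping.lookup f a) * ?P)
      \<subseteq> Poly_Mapping.keys f \<union> Poly_Mapping.keys ?P"
    by (auto simp: in_keys_iff lookup_minus lookup_single_0_mult)
  ultimately show ?thesis
    unfolding symmetric_width_ge_def
    by (auto intro!: symmetric_diff symmetric_mult symmetric_single_0 symmetric_leading_orbit_sum
        homogeneous_diff homogeneous_single_0_mult)
qed

lemma card_width_keys_reduce_less:
  fixes f :: "('d::finite, unit, 'a::comm_ring_1) tens"
  assumes "symmetric f" and a: "a \<in> Poly_Mapping.keys f" "card (exp_supp a) = l"
  defines "g \<equiv> f - Poly_Mapping.single 0 (Poly_Mapping.lookup f a) * leading_orbit_sum a"
  shows "card {E\<in>Poly_Mapping.keys g. card (exp_supp E) = l}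
           < card {E\<in>Poly_Mapping.keys f. card (exp_supp E) = l}"
proof -
  have "E \<in> Poly_Mapping.keys f - {a}" if E: "E \<in> Poly_Mapping.keys g" "card (exp_supp E) = l" for E
  proof (cases "\<exists>\<sigma>. \<sigma> permutes UNIV \<and> (\<forall>j. exp_vec E j = exp_vec a (\<sigma> j))")
    case True
    then have "Poly_Mapping.lookup f E = Poly_Mapping.lookup f a"
      using symmetric_lookup_eq[OF assms(1)] by blast
    then show ?thesis
      using E True a(2) by (simp add: g_def in_keys_iff lookup_minus lookup_single_0_mult
          lookup_leading_orbit_sum)
  next
    case False
    then have "E \<noteq> a"
      using permutes_id by fastforce
    with E False a(2) show ?thesis
      by (simp add: g_def in_keys_iff lookup_minus lookup_single_0_mult lookup_leading_orbit_sum)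
  qed
  then have "card {E\<in>Poly_Mapping.keys g. card (exp_supp E) = l}
      \<le> card ({E\<in>Poly_Mapping.keys f. card (exp_supp E) = l} - {a})"
    by (intro card_mono) auto
  also have "\<dots> < card {E\<in>Poly_Mapping.keys f. card (exp_supp E) = l}"
    using a by (intro card_Diff1_less) simp_all
  finally show ?thesis .
qed

lemma symmetric_width_ge_span:
  assumes "0 < n" "l \<le> Suc n" "symmetric_width_ge n l (f :: ('d::finite, unit, 'a::comm_ring_1) tens)"
  shows "\<exists>c. f - Poly_Mapping.single 0 c * gam n (\<lambda>_. 1) \<in> Gamma_less (\<lambda>_. n)"
  using assms(2,3)
proof (induction arbitrary: f rule: inc_induct)
  case base
  have "Poly_Mapping.keys f = {}"
    using base card_exp_supp_le_degree not_less_eq_eq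
    unfolding symmetric_width_ge_def homogeneous_unit_iff by fastforce
  then show ?case
    using Gamma_less_of_int[of 0] by (intro exI[of _ 0]) simp
next
  case (step l)
  show ?case
    using step.prems
  proof (induction "card {E\<in>Poly_Mapping.keys f. card (exp_supp E) = l}" arbitrary: f rule: less_induct)
    case less
    show ?case
    proof (cases "{E\<in>Poly_Mapping.keys f. card (exp_supp E) = l} = {}")
      case True
      then have "symmetric_width_ge n (Suc l) f"
        using less.prems unfolding symmetric_width_ge_def by force
      then show ?thesis by (rule step.IH)
    next
      case False
      then obtain a where a: "a \<in> Poly_Mapping.keys f" "card (exp_supp a) = l" by blast
      let ?b = "Poly_Mapping.lookup f a" and ?G = "gam n (\<lambda>_. 1) :: ('d, unit, 'a) tens"
      obtain c where c: "f - Poly_Mapping.single 0 ?b * leading_orbit_sum a - Poly_Mapping.single 0 c * ?G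
          \<in> Gamma_less (\<lambda>_. n)"
        using less.hyps[OF card_width_keys_reduce_less symmetric_width_ge_reduce] less.prems a
        unfolding symmetric_width_ge_def by blast
      have "(\<Sum>j\<in>UNIV. exp_vec a j) = n"
        using less.prems a(1) unfolding symmetric_width_ge_def homogeneous_unit_iff by blast
      then consider "(leading_orbit_sum a :: ('d, unit, 'a) tens) \<in> Gamma_less (\<lambda>_. n)"
        | "leading_orbit_sum a = ?G"
        using leading_orbit_sum_cases \<open>0 < n\<close> by blast
      then show ?thesis
      proof cases
        case 1
        then have "(f - Poly_Mapping.single 0 ?b * leading_orbit_sum a - Poly_Mapping.single 0 c * ?G)
            + Poly_Mapping.single 0 ?b * leading_orbit_sum a \<in> Gamma_less (\<lambda>_. n)"
          by (intro Gamma_less_add c Gamma_less_single_0_mult)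
        then show ?thesis
          by (intro exI[of _ c]) (simp add: algebra_simps)
      next
        case 2
        then show ?thesis
          using c by (intro exI[of _ "c + ?b"]) (simp add: single_add algebra_simps)
      qed
    qed
  qed
qed

lemma symmetric_homogeneous_unit_span:
  assumes "0 < n" "symmetric f" "homogeneous (\<lambda>_. n) (f :: ('d::finite, unit, 'a::comm_ring_1) tens)"
  obtains c where "f - Poly_Mapping.single 0 c * gam n (\<lambda>_. 1) \<in> Gamma_less (\<lambda>_. n)"
  using symmetric_width_ge_span[of n 0 f] assms unfolding symmetric_width_ge_def by auto


section \<open>Detecting \<open>\<gamma>\<^sup>n(x) \<times> \<gamma>\<^sup>d\<^sup>-\<^sup>n(1)\<close> modulo lower degrees\<close>

lemma exists_primitive_root_of_unity:
  assumes "0 < n"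
  obtains \<omega> :: complex where "\<omega> ^ n = 1" "\<And>t. 0 < t \<Longrightarrow> t < n \<Longrightarrow> \<omega> ^ t \<noteq> 1"
proof
  let ?f = "\<lambda>k. cis (2 * pi * real k / real n)"
  have pow: "cis (2 * pi / real n) ^ t = ?f t" for t
    by (simp add: DeMoivre mult.commute)
  show "cis (2 * pi / real n) ^ n = 1"
    using assms by (simp add: DeMoivre)
  fix t assume t: "0 < t" "t < n"
  show "cis (2 * pi / real n) ^ t \<noteq> 1"
  proof
    assume "cis (2 * pi / real n) ^ t = 1"
    then have "?f t = ?f 0"
      by (simp add: pow)
    then have "t = 0"
      using inj_onD[OF bij_betw_imp_inj_on[OF bij_betw_roots_unity[OF assms]]] t assms by simp
    with t show False by simp
  qed
qed

lemma cycle_of_list_nth: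
  assumes "distinct xs" "i < length xs"
  shows "cycle_of_list xs (xs ! i) = xs ! (Suc i mod length xs)"
proof -
  have "map (cycle_of_list xs) xs = rotate1 xs"
    using cyclic_rotation[OF assms(1), of 1] by simp
  then have "map (cycle_of_list xs) xs ! i = rotate1 xs ! i"
    by simp
  then show ?thesis
    using assms(2) by (simp add: nth_rotate1)
qed

lemma power_mod_if_power_eq_1:
  fixes \<omega> :: "'a::monoid_mult"
  assumes "\<omega> ^ n = 1"
  shows "\<omega> ^ (a mod n) = \<omega> ^ a"
proof -
  have "\<omega> ^ a = (\<omega> ^ n) ^ (a div n) * \<omega> ^ (a mod n)"
    by (simp flip: power_mult power_add)
  then show ?thesis
    using assms by simp
qed

text \<open>Placing \<open>1, \<omega>, \<dots>, \<omega>\<^sup>n\<^sup>-\<^sup>1\<close> on \<open>n\<close> of the tensor positions and \<open>0\<close> elsewhere, multiplication by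
  \<open>\<omega>\<close> becomes the cyclic permutation of those positions.\<close>

lemma exists_rotated_point:
  fixes \<omega> :: "'b::idom"
  assumes "0 < n" "n \<le> card (UNIV :: 'd set)" "\<omega> ^ n = 1"
  obtains z :: "'d::finite \<Rightarrow> 'b" and \<rho> T where "\<rho> permutes UNIV" "\<And>j. z (\<rho> j) = \<omega> * z j"
    "card T = n" "\<And>j. j \<notin> T \<Longrightarrow> z j = 0" "\<And>j. j \<in> T \<Longrightarrow> z j \<noteq> 0"
proof -
  obtain ys :: "'d list" where ys: "set ys = UNIV" "distinct ys"
    using finite_distinct_list[of "UNIV :: 'd set"] by auto
  define xs where "xs = take n ys"
  have xs: "distinct xs" "length xs = n"
    using ys assms(2) distinct_card[OF ys(2)] by (simp_all add: xs_def)
  define z where "z x = (if x \<in> set xs then \<omega> ^ (THE i. i < n \<and> xs ! i = x) else 0)" for x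
  have z_nth: "z (xs ! i) = \<omega> ^ i" if "i < n" for i
  proof -
    have "(THE i'. i' < n \<and> xs ! i' = xs ! i) = i"
      using that xs by (auto simp: nth_eq_iff_index_eq)
    then show ?thesis
      using that xs by (simp add: z_def)
  qed
  have "z (cycle_of_list xs x) = \<omega> * z x" for x
  proof (cases "x \<in> set xs")
    case True
    then obtain i where i: "i < n" "x = xs ! i"
      using xs by (auto simp: in_set_conv_nth)
    then have "cycle_of_list xs x = xs ! (Suc i mod n)"
      using cycle_of_list_nth[OF xs(1)] xs(2) by simp
    then show ?thesis
      using i assms(1) by (simp add: z_nth power_mod_if_power_eq_1[OF assms(3)])
  next
    case False
    then show ?thesis
      by (simp add: id_outside_supp z_def)
  qed
  moreover have "\<omega> \<noteq> 0"
    using assms(1,3) by (auto simp: power_0_left)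
  ultimately show thesis
    using that[of "cycle_of_list xs" z "set xs"] permutes_subset[OF cycle_permutes[of xs]]
      distinct_card[OF xs(1)] xs
    by (auto simp: z_def)
qed


text \<open>Substituting \<open>z\<^sub>j t\<close> for the variable in the \<open>j\<close>-th tensor factor; the coefficient of \<open>t\<^sup>s\<close>
  of the image of a homogeneous element of degree \<open>s\<close> is its value at \<open>z\<close>.\<close>

definition mon_value :: "('d::finite \<Rightarrow> 'b::idom) \<Rightarrow> (('d \<times> unit) \<Rightarrow>\<^sub>0 nat) \<Rightarrow> 'b"
  where "mon_value z E = (\<Prod>j\<in>UNIV. z j ^ exp_vec E j)"

definition mon_degree :: "(('d::finite \<times> unit) \<Rightarrow>\<^sub>0 nat) \<Rightarrow> nat"
  where "mon_degree E = (\<Sum>j\<in>UNIV. exp_vec E j)"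

definition point_eval :: "('d::finite \<Rightarrow> 'b::idom) \<Rightarrow> ('d, unit, int) tens \<Rightarrow> 'b poly"
  where "point_eval z = pm_lift (\<lambda>E. monom (mon_value z E) (mon_degree E)) of_int"

lemma mon_value_add: "mon_value z (E + E') = mon_value z E * mon_value z E'"
  by (simp add: mon_value_def exp_vec_add power_add prod.distrib)

lemma mon_degree_add: "mon_degree (E + E') = mon_degree E + mon_degree E'"
  by (simp add: mon_degree_def exp_vec_add sum.distrib)

lemma point_eval_add: "point_eval z (p + q) = point_eval z p + point_eval z q"
  unfolding point_eval_def by (rule pm_lift_add) simp_all

lemma point_eval_sum: "point_eval z (\<Sum>i\<in>I. f i) = (\<Sum>i\<in>I. point_eval z (f i))"
  unfolding point_eval_def by (rule pm_lift_sum) simp_all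

lemma point_eval_mult: "point_eval z (p * q) = point_eval z p * point_eval z q"
  unfolding point_eval_def
  by (rule pm_lift_mult) (simp_all add: mon_value_add mon_degree_add mult_monom)

lemma point_eval_single: "point_eval z (Poly_Mapping.single E c) = monom (of_int c * mon_value z E) (mon_degree E)"
  unfolding point_eval_def by (simp add: pm_lift_single of_int_monom mult_monom)

lemma point_eval_single_0: "point_eval z (Poly_Mapping.single 0 c) = [:of_int c:]"
  by (simp add: point_eval_single mon_value_def mon_degree_def exp_vec_def monom_0)

lemma coeff_point_eval_homogeneous:
  assumes "homogeneous (\<lambda>_. t) g"
  shows "coeff (point_eval z g) s
       = (if s = t then \<Sum>E\<in>Poly_Mapping.keys g. of_int (Poly_Mapping.lookup g E) * mon_value z E else 0)"
proof -
  have "mon_degree E = t" if "E \<in> Poly_Mapping.keys g" for E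
    using assms that unfolding homogeneous_unit_iff mon_degree_def by blast
  then show ?thesis
    unfolding point_eval_def pm_lift_def coeff_sum
    by (auto simp: of_int_monom mult_monom intro!: sum.neutral)
qed

lemma coeff_point_eval_gam:
  fixes z :: "'d::finite \<Rightarrow> 'b::idom"
  shows "coeff (point_eval z (gam n (\<lambda>_. 1))) n = elem_sym z n"
proof -
  have exps: "exp_vec (tmon (exps_on S (\<lambda>_::unit. 1))) j = (if j \<in> S then 1 else 0)" for S j
    by (simp add: exp_vec_def lookup_tmon exps_on_def)
  have value_eq: "mon_value z (tmon (exps_on S (\<lambda>_. 1))) = (\<Prod>j\<in>S. z j)" for S
  proof -
    have "mon_value z (tmon (exps_on S (\<lambda>_. 1))) = (\<Prod>j\<in>UNIV. if j \<in> S then z j else 1)"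
      unfolding mon_value_def exps by (intro prod.cong) simp_all
    also have "\<dots> = (\<Prod>j\<in>S. z j)"
      by (simp add: prod.If_cases)
    finally show ?thesis .
  qed
  have degree_eq: "mon_degree (tmon (exps_on S (\<lambda>_::unit. 1))) = card S" for S :: "'d set"
    unfolding mon_degree_def exps by (simp add: sum.If_cases)
  have "coeff (point_eval z (gam n (\<lambda>_. 1))) n
      = (\<Sum>S\<in>{S. card S = n}. coeff (monom (\<Prod>j\<in>S. z j) (card S)) n)"
    unfolding gam_eq point_eval_sum coeff_sum ptensor_def point_eval_single value_eq degree_eq by simp
  also have "\<dots> = elem_sym z n"
    unfolding elem_sym_def by (intro sum.cong) simp_all
  finally show ?thesis .
qed

text \<open>A symmetric element of degree \<open>s\<close> takes the same value at \<open>z\<close> and at \<open>\<omega> z = z \<circ> \<rho>\<close>.\<close>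

lemma symmetric_value_rotation:
  assumes \<rho>: "\<rho> permutes UNIV" and z\<rho>: "\<And>j. z (\<rho> j) = \<omega> * z j"
    and sym: "symmetric g" and hom: "homogeneous (\<lambda>_. s) (g :: ('d::finite, unit, int) tens)"
  shows "(\<Sum>E\<in>Poly_Mapping.keys g. of_int (Poly_Mapping.lookup g E) * mon_value z E)
       = \<omega> ^ s * (\<Sum>E\<in>Poly_Mapping.keys g. of_int (Poly_Mapping.lookup g E) * mon_value z E)"
proof -
  let ?\<sigma> = "inv \<rho>"
  have \<sigma>: "?\<sigma> permutes UNIV" by (rule permutes_inv[OF \<rho>])
  have "mon_value z (perm_mon ?\<sigma> E) = \<omega> ^ s * mon_value z E" if "E \<in> Poly_Mapping.keys g" for E
  proof -
    have "mon_value z (perm_mon ?\<sigma> E) = (\<Prod>j\<in>UNIV. z (\<rho> j) ^ exp_vec E (?\<sigma> (\<rho> j)))"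
      unfolding mon_value_def exp_vec_perm_mon by (rule prod.permute[OF \<rho>, simplified comp_def])
    also have "\<dots> = (\<Prod>j\<in>UNIV. \<omega> ^ exp_vec E j * z j ^ exp_vec E j)"
      by (simp add: permutes_inverses(2)[OF \<rho>] z\<rho> power_mult_distrib)
    also have "\<dots> = \<omega> ^ (\<Sum>j\<in>UNIV. exp_vec E j) * mon_value z E"
      by (simp add: prod.distrib mon_value_def power_sum)
    finally show ?thesis
      using hom that unfolding homogeneous_unit_iff by simp
  qed
  note value_perm = this
  have "(\<Sum>E\<in>Poly_Mapping.keys g. of_int (Poly_Mapping.lookup g E) * mon_value z E)
      = (\<Sum>E\<in>Poly_Mapping.keys g. of_int (Poly_Mapping.lookup g (perm_mon ?\<sigma> E)) * mon_value z (perm_mon ?\<sigma> E))"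
    by (rule sum.reindex_bij_betw[OF symmetric_bij_betw_keys[OF sym \<sigma>], symmetric])
  also have "\<dots> = (\<Sum>E\<in>Poly_Mapping.keys g. \<omega> ^ s * (of_int (Poly_Mapping.lookup g E) * mon_value z E))"
    by (intro sum.cong) (simp_all add: symmetric_lookup_perm_mon[OF sym \<sigma>] value_perm)
  also have "\<dots> = \<omega> ^ s * (\<Sum>E\<in>Poly_Mapping.keys g. of_int (Poly_Mapping.lookup g E) * mon_value z E)"
    by (simp add: sum_distrib_left)
  finally show ?thesis .
qed

lemma coeff_point_eval_Gamma_less:
  assumes \<rho>: "\<rho> permutes UNIV" and z\<rho>: "\<And>j. z (\<rho> j) = \<omega> * z j"
    and \<omega>: "\<And>t. 0 < t \<Longrightarrow> t < n \<Longrightarrow> \<omega> ^ t \<noteq> 1"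
    and p: "(p :: ('d::finite, unit, int) tens) \<in> Gamma_less (\<lambda>_. n)"
    and s: "0 < s" "s \<le> n"
  shows "coeff (point_eval z p) s = 0"
  using p s unfolding Gamma_less_def
proof (induction arbitrary: s rule: gen_alg.induct)
  case (scalar a)
  then show ?case by (auto simp: point_eval_single_0 coeff_pCons split: nat.split)
next
  case (gen g)
  then obtain \<beta> where g: "symmetric g" "\<beta> < (\<lambda>_. n)" "homogeneous \<beta> g" by blast
  have hom: "homogeneous (\<lambda>_. \<beta> ()) g"
    using g(3) by (simp add: fun_eq_iff[of \<beta>, symmetric])
  have "\<beta> () < n"
    using g(2) by (simp add: less_const_fun_unit_iff)
  show ?case
  proof (cases "s = \<beta> ()")
    case True
    let ?S = "\<Sum>E\<in>Poly_Mapping.keys g. of_int (Poly_Mapping.lookup g E) * mon_value z E"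
    have "(\<omega> ^ s - 1) * ?S = 0"
      using symmetric_value_rotation[where z=z and \<omega>=\<omega>, OF \<rho> z\<rho> g(1) hom] True by (simp add: algebra_simps)
    moreover have "\<omega> ^ s \<noteq> 1"
      using \<omega> True gen.prems \<open>\<beta> () < n\<close> by simp
    ultimately show ?thesis
      using True by (simp add: coeff_point_eval_homogeneous[OF hom])
  next
    case False
    then show ?thesis
      by (simp add: coeff_point_eval_homogeneous[OF hom])
  qed
next
  case (add p q)
  then show ?case by (simp add: point_eval_add)
next
  case (mult p q)
  have "coeff (point_eval z p) i * coeff (point_eval z q) (s - i) = 0" if "i \<le> s" for i
    using mult.IH[of i] mult.IH[of "s - i"] mult.prems that by (cases "i = 0") auto
  then show ?case
    by (simp add: point_eval_mult coeff_mult sum.neutral)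
qed

lemma elem_sym_supported:
  assumes "card T = n" "\<And>j. j \<notin> T \<Longrightarrow> z j = 0" "\<And>j. j \<in> T \<Longrightarrow> z j \<noteq> 0"
  shows "elem_sym (z :: 'd::finite \<Rightarrow> 'b::idom) n \<noteq> 0"
proof -
  have "(\<Prod>j\<in>S. z j) = 0" if "S \<in> {S. card S = n} - {T}" for S
  proof -
    have "\<not> S \<subseteq> T"
    proof
      assume "S \<subseteq> T"
      then have "S = T"
        using that assms(1) card_subset_eq[of T S] by simp
      with that show False by simp
    qed
    then obtain j where "j \<in> S" "j \<notin> T" by blast
    then show ?thesis
      using assms(2)[of j] by (intro prod_zero) auto
  qed
  then have "(\<Sum>S\<in>{S. card S = n} - {T}. \<Prod>j\<in>S. z j) = 0"
    by (intro sum.neutral) blast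
  moreover have "elem_sym z n = (\<Prod>j\<in>T. z j) + (\<Sum>S\<in>{S. card S = n} - {T}. \<Prod>j\<in>S. z j)"
    unfolding elem_sym_def using assms(1) by (intro sum.remove) auto
  ultimately have "elem_sym z n = (\<Prod>j\<in>T. z j)"
    by simp
  then show ?thesis
    using assms(3) by simp
qed

lemma gam_independent_mod_Gamma_less:
  assumes "0 < n" "n \<le> card (UNIV :: 'd set)"
    and "of_int c * (gam n (\<lambda>_. 1) :: ('d::finite, unit, int) tens) \<in> Gamma_less (\<lambda>_. n)"
  shows "c = 0"
proof -
  obtain \<omega> :: complex where \<omega>: "\<omega> ^ n = 1" "\<And>t. 0 < t \<Longrightarrow> t < n \<Longrightarrow> \<omega> ^ t \<noteq> 1"
    using exists_primitive_root_of_unity[OF assms(1)] by metis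
  obtain z :: "'d \<Rightarrow> complex" and \<rho> T where rot: "\<rho> permutes UNIV" "\<And>j. z (\<rho> j) = \<omega> * z j"
    "card T = n" "\<And>j. j \<notin> T \<Longrightarrow> z j = 0" "\<And>j. j \<in> T \<Longrightarrow> z j \<noteq> 0"
    using exists_rotated_point[OF assms(1,2) \<omega>(1)] by metis
  have "coeff (point_eval z (of_int c * gam n (\<lambda>_. 1))) n = 0"
    by (rule coeff_point_eval_Gamma_less[where z=z and \<omega>=\<omega>, OF rot(1,2) \<omega>(2) assms(3) assms(1) order_refl])
  moreover have "(of_int c :: ('d, unit, int) tens) = Poly_Mapping.single 0 c"
    by (subst single_of_int[symmetric]) simp
  ultimately have "of_int c * elem_sym z n = 0"
    using coeff_point_eval_gam[of z n] by (simp add: point_eval_mult point_eval_single_0)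
  then show "c = 0"
    using elem_sym_supported[OF rot(3-5)] by simp
qed


section \<open>The one-variable integral case\<close>

text \<open>Newton's identity for \<open>x\<^sup>\<beta>\<close> with exponent \<open>km\<close> and for \<open>x\<^sup>m\<^sup>\<beta>\<close> with exponent \<open>k\<close> both express
  \<open>\<gamma>\<^sup>1(x\<^sup>k\<^sup>m\<^sup>\<beta>)\<close>; comparing them proves the proposition up to the factor \<open>k\<close>.\<close>

lemma of_nat_mult_gam_difference_in_Gamma_less:
  assumes "0 < k" "0 < m" "\<beta> x \<noteq> 0"
  shows "of_nat k * ((gam k (\<lambda>i. m * \<beta> i) :: ('d::finite, 'r::finite, 'a::comm_ring_1) tens)
           - ((-1) ^ (k * m - k) * of_nat m) * gam (k * m) \<beta>) \<in> Gamma_less (\<lambda>i. k * m * \<beta> i)"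
proof -
  let ?H = "gam k (\<lambda>i. m * \<beta> i) :: ('d, 'r, 'a) tens" and ?G = "gam (k * m) \<beta> :: ('d, 'r, 'a) tens"
  let ?P = "gam 1 (\<lambda>i. k * m * \<beta> i) :: ('d, 'r, 'a) tens"
  have "?P - (-1) ^ (k - 1) * of_nat k * ?H \<in> Gamma_less (\<lambda>i. k * m * \<beta> i)"
    using newton_Gamma_less[of k "\<lambda>i. m * \<beta> i" x] assms by (simp add: mult.assoc)
  moreover have "?P - (-1) ^ (k * m - 1) * of_nat (k * m) * ?G \<in> Gamma_less (\<lambda>i. k * m * \<beta> i)"
    using newton_Gamma_less[of "k * m" \<beta> x] assms by simp
  ultimately have "of_int (- ((-1) ^ (k - 1))) * ((?P - (-1) ^ (k - 1) * of_nat k * ?H)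
      - (?P - (-1) ^ (k * m - 1) * of_nat (k * m) * ?G)) \<in> Gamma_less (\<lambda>i. k * m * \<beta> i)"
    by (rule Gamma_less_of_int_mult[OF Gamma_less_diff])
  moreover have "((-1) ^ (k - 1) * (-1) ^ (k * m - 1) :: ('d, 'r, 'a) tens) = (-1) ^ (k * m - k)"
  proof -
    have "k * m - 1 = (k - 1) + (k * m - k)"
      using assms by (cases m) auto
    then have "((-1) ^ (k - 1) * (-1) ^ (k * m - 1) :: ('d, 'r, 'a) tens)
        = ((-1) * (-1)) ^ (k - 1) * (-1) ^ (k * m - k)"
      by (simp only: power_add power_mult_distrib mult_ac)
    then show ?thesis
      by simp
  qed
  ultimately show ?thesis
    by (simp add: algebra_simps flip: power_add)
qed

lemma gam_difference_in_Gamma_less_unit: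
  assumes "0 < k" "0 < m"
  shows "(gam k (\<lambda>_. m) :: ('d::finite, unit, int) tens)
           - ((-1) ^ (k * m - k) * of_nat m) * gam (k * m) (\<lambda>_. 1) \<in> Gamma_less (\<lambda>_. k * m)"
    (is "?X \<in> _")
proof -
  let ?G = "gam (k * m) (\<lambda>_. 1) :: ('d, unit, int) tens"
  have "((-1) ^ (k * m - k) * of_nat m :: ('d, unit, int) tens) = of_int ((-1) ^ (k * m - k) * int m)"
    by simp
  then have "symmetric ?X" "homogeneous (\<lambda>_. k * m) ?X"
    using homogeneous_gam[of k "\<lambda>_::unit. m"] homogeneous_gam[of "k * m" "\<lambda>_::unit. 1"]
    by (auto simp flip: single_of_int intro!: symmetric_diff symmetric_mult symmetric_single_0
        symmetric_gam homogeneous_diff homogeneous_single_0_mult)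
  then obtain c where "?X - Poly_Mapping.single 0 c * ?G \<in> Gamma_less (\<lambda>_. k * m)"
    using symmetric_homogeneous_unit_span[of "k * m" ?X] assms by auto
  moreover have "(Poly_Mapping.single 0 c :: ('d, unit, int) tens) = of_int c"
    by (subst single_of_int[symmetric]) simp
  ultimately have c: "?X - of_int c * ?G \<in> Gamma_less (\<lambda>_. k * m)"
    by simp
  show ?thesis
  proof (cases "card (UNIV :: 'd set) < k * m")
    case True
    then show ?thesis
      using c by (simp add: gam_eq_0_if_card_less)
  next
    case False
    have "of_nat k * ?X \<in> Gamma_less (\<lambda>_. k * m)"
      using of_nat_mult_gam_difference_in_Gamma_less[of k m "\<lambda>_. 1" "()"] assms by simp
    then have "of_nat k * ?X - of_int (int k) * (?X - of_int c * ?G) \<in> Gamma_less (\<lambda>_. k * m)"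
      using c by (rule Gamma_less_diff[OF _ Gamma_less_of_int_mult])
    then have "of_int (int k * c) * ?G \<in> Gamma_less (\<lambda>_. k * m)"
      by (simp add: algebra_simps)
    then have "int k * c = 0"
      using assms False by (intro gam_independent_mod_Gamma_less[of "k * m"]) simp_all
    then have "c = 0"
      using assms by simp
    then show ?thesis
      using c by simp
  qed
qed


section \<open>Transfer to several variables and arbitrary coefficients\<close>

definition subst_mon :: "('r::finite \<Rightarrow> nat) \<Rightarrow> ('d::finite, unit, int) tens \<Rightarrow> ('d, 'r, 'a::comm_ring_1) tens"
  where "subst_mon \<alpha> = pm_lift (\<lambda>E. ptensor (\<lambda>j i. exp_vec E j * \<alpha> i)) of_int"

lemma subst_mon_add: "subst_mon \<alpha> (p + q) = subst_mon \<alpha> p + subst_mon \<alpha> q"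
  unfolding subst_mon_def by (rule pm_lift_add) simp_all

lemma subst_mon_diff: "subst_mon \<alpha> (p - q) = subst_mon \<alpha> p - subst_mon \<alpha> q"
  unfolding subst_mon_def by (rule pm_lift_diff) simp_all

lemma subst_mon_sum: "subst_mon \<alpha> (\<Sum>i\<in>I. f i) = (\<Sum>i\<in>I. subst_mon \<alpha> (f i))"
  unfolding subst_mon_def by (rule pm_lift_sum) simp_all

lemma subst_mon_mult: "subst_mon \<alpha> (p * q) = subst_mon \<alpha> p * subst_mon \<alpha> q"
  unfolding subst_mon_def
  by (rule pm_lift_mult) (simp_all add: ptensor_mult exp_vec_add distrib_right)

lemma subst_mon_single:
  "subst_mon \<alpha> (Poly_Mapping.single E c) = of_int c * ptensor (\<lambda>j i. exp_vec E j * \<alpha> i)"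
  unfolding subst_mon_def by (simp add: pm_lift_single)

lemma subst_mon_single_0:
  "(subst_mon \<alpha> (Poly_Mapping.single 0 c) :: ('d::finite, 'r::finite, 'a::comm_ring_1) tens) = of_int c"
proof -
  have "(\<lambda>j i. exp_vec (0 :: ('d \<times> unit) \<Rightarrow>\<^sub>0 nat) j * \<alpha> i) = (\<lambda>_ _. 0)"
    by (simp add: exp_vec_def fun_eq_iff)
  then show ?thesis
    by (simp add: subst_mon_single ptensor_zero)
qed

lemma subst_mon_gam:
  "(subst_mon \<alpha> (gam k (\<lambda>_. b)) :: ('d::finite, 'r::finite, 'a::comm_ring_1) tens) = gam k (\<lambda>i. b * \<alpha> i)"
proof -
  have "(\<lambda>j i. exp_vec (tmon (exps_on S (\<lambda>_::unit. b))) j * \<alpha> i) = exps_on S (\<lambda>i. b * \<alpha> i)" for S :: "'d set"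
    by (simp add: exp_vec_def lookup_tmon exps_on_def fun_eq_iff)
  then show ?thesis
    unfolding gam_eq subst_mon_sum ptensor_def subst_mon_single by simp
qed

lemma perm_tens_subst_mon:
  "perm_tens \<sigma> (subst_mon \<alpha> p :: ('d::finite, 'r::finite, 'a::comm_ring_1) tens)
     = subst_mon \<alpha> (perm_tens \<sigma> p)"
proof -
  have "perm_tens \<sigma> (of_int c :: ('d, 'r, 'a) tens) = of_int c" for c
    using perm_tens_single[of \<sigma> 0 "of_int c"] by (simp add: perm_mon_zero)
  then have "perm_tens \<sigma> (of_int c * q) = of_int c * perm_tens \<sigma> q" for c and q :: "('d, 'r, 'a) tens"
    by (simp add: perm_tens_mult)
  then have "perm_tens \<sigma> (subst_mon \<alpha> (Poly_Mapping.single E c) :: ('d, 'r, 'a) tens)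
      = subst_mon \<alpha> (perm_tens \<sigma> (Poly_Mapping.single E c))" for E c
    by (simp add: subst_mon_single perm_tens_single perm_tens_ptensor exp_vec_perm_mon)
  then show ?thesis
    by (subst (1 2) pm_expand) (simp add: subst_mon_sum perm_tens_sum)
qed

lemma symmetric_subst_mon: "symmetric p \<Longrightarrow> symmetric (subst_mon \<alpha> p)"
  by (simp add: symmetric_iff_perm_tens perm_tens_subst_mon)

lemma homogeneous_subst_mon:
  assumes "homogeneous (\<lambda>_. t) p"
  shows "homogeneous (\<lambda>i. t * \<alpha> i) (subst_mon \<alpha> p :: ('d::finite, 'r::finite, 'a::comm_ring_1) tens)"
proof -
  have "homogeneous (\<lambda>i. t * \<alpha> i) (subst_mon \<alpha> (Poly_Mapping.single E (Poly_Mapping.lookup p E)) :: ('d, 'r, 'a) tens)"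
    if "E \<in> Poly_Mapping.keys p" for E
  proof -
    have "(\<lambda>i. \<Sum>j\<in>UNIV. exp_vec E j * \<alpha> i) = (\<lambda>i. t * \<alpha> i)"
      using assms that unfolding homogeneous_unit_iff by (simp add: sum_distrib_right[symmetric])
    moreover have "homogeneous (\<lambda>i. \<Sum>j\<in>UNIV. exp_vec E j * \<alpha> i)
        (ptensor (\<lambda>j i. exp_vec E j * \<alpha> i) :: ('d, 'r, 'a) tens)"
      by (rule homogeneous_ptensor)
    ultimately have "homogeneous (\<lambda>i. t * \<alpha> i) (Poly_Mapping.single 0 (of_int (Poly_Mapping.lookup p E))
        * ptensor (\<lambda>j i. exp_vec E j * \<alpha> i) :: ('d, 'r, 'a) tens)"
      by (intro homogeneous_single_0_mult) simp
    then show ?thesis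
      by (simp add: subst_mon_single)
  qed
  then show ?thesis
    by (subst pm_expand) (simp add: subst_mon_sum homogeneous_sum)
qed

lemma subst_mon_Gamma_less:
  assumes "\<alpha> x \<noteq> 0" and "p \<in> Gamma_less (\<lambda>_. n)"
  shows "(subst_mon \<alpha> p :: ('d::finite, 'r::finite, 'a::comm_ring_1) tens) \<in> Gamma_less (\<lambda>i. n * \<alpha> i)"
  using assms(2) unfolding Gamma_less_def
proof (induction rule: gen_alg.induct)
  case (scalar c)
  then show ?case
    using Gamma_less_of_int[of c "\<lambda>i. n * \<alpha> i"] unfolding Gamma_less_def by (simp add: subst_mon_single_0)
next
  case (gen g)
  then obtain \<beta> where g: "symmetric g" "\<beta> < (\<lambda>_. n)" "homogeneous \<beta> g" by blast
  have "\<beta> () < n"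
    using g(2) by (simp add: less_const_fun_unit_iff)
  moreover have "homogeneous (\<lambda>_. \<beta> ()) g"
    using g(3) by (simp add: fun_eq_iff[of \<beta>, symmetric])
  ultimately have "subst_mon \<alpha> g \<in> Gamma_less (\<lambda>i. n * \<alpha> i)"
    using assms(1) g(1)
    by (intro Gamma_less_generator[OF symmetric_subst_mon homogeneous_subst_mon less_fun_scale])
  then show ?case unfolding Gamma_less_def .
next
  case (add p q)
  then show ?case by (simp add: subst_mon_add gen_alg.add)
next
  case (mult p q)
  then show ?case by (simp add: subst_mon_mult gen_alg.mult)
qed

theorem proposition7p5:
  fixes \<alpha> :: "'r::finite \<Rightarrow> nat" and k m :: nat
  assumes "0 < k" and "0 < m" and "k \<le> card (UNIV :: 'd set)"
  shows "(k * m \<le> card (UNIV :: 'd set) \<longrightarrow>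
            (gam k (\<lambda>i. m * \<alpha> i) :: ('d::finite, 'r, 'a::comm_ring_1) tens)
              - ((- 1) ^ (k * m - k) * of_nat m) * gam (k * m) \<alpha>
            \<in> Gamma_less (\<lambda>i. k * m * \<alpha> i))
       \<and> (card (UNIV :: 'd set) < k * m \<longrightarrow>
            (gam k (\<lambda>i. m * \<alpha> i) :: ('d, 'r, 'a) tens) \<in> Gamma_less (\<lambda>i. k * m * \<alpha> i))"
proof -
  let ?c = "(-1) ^ (k * m - k) * int m"
  have "(gam k (\<lambda>i. m * \<alpha> i) :: ('d, 'r, 'a) tens) - of_int ?c * gam (k * m) \<alpha>
      \<in> Gamma_less (\<lambda>i. k * m * \<alpha> i)"
  proof (cases "\<alpha> = (\<lambda>_. 0)")
    case True
    then have "(gam k (\<lambda>i. m * \<alpha> i) :: ('d, 'r, 'a) tens) - of_int ?c * gam (k * m) \<alpha>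
        = of_int (int (card {S::'d set. card S = k}) - ?c * int (card {S::'d set. card S = k * m}))"
      by (simp add: gam_zero_exponent)
    then show ?thesis
      by (simp only: Gamma_less_of_int)
  next
    case False
    then obtain x where "\<alpha> x \<noteq> 0" by auto
    then have "subst_mon \<alpha> (gam k (\<lambda>_. m) - of_int ?c * gam (k * m) (\<lambda>_. 1))
        \<in> Gamma_less (\<lambda>i. k * m * \<alpha> i)"
      using gam_difference_in_Gamma_less_unit[OF assms(1,2)] by (intro subst_mon_Gamma_less) simp_all
    then show ?thesis
      by (simp add: subst_mon_diff subst_mon_mult subst_mon_gam subst_mon_single_0 flip: single_of_int)
  qed
  moreover have "card (UNIV :: 'd set) < k * m \<Longrightarrow> (gam (k * m) \<alpha> :: ('d, 'r, 'a) tens) = 0"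
    by (rule gam_eq_0_if_card_less)
  ultimately show ?thesis
    by auto
qed

end
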